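(* Let $K$ be a closed braid diagram and let $K'$ be the result of negatively stabilizing $K$ once (so $\mathit{sl}(K')=\mathit{sl}(K)-2$). Let $\psi$ denote $\psi^+$ or $\psi^-$, and let $f\colon\mathcal{C}(K)\to\mathcal{C}(K')$ and $g\colon\mathcal{C}(K')\to\mathcal{C}(K)$ be the filtered chain maps giving Reidemeister I invariance for this negative stabilization. Then there are elements $\theta\in\mathcal{F}_{\mathit{sl}(K')}\mathcal{C}^{-1}(K)$ and $\theta'\in\mathcal{F}_{\mathit{sl}(K')}\mathcal{C}^{-1}(K')$, local in the sense described in the context, such that \[ g(\psi(K'))=\pm\psi(K)+\delta\theta\ \text{in }\mathcal{F}_{\mathit{sl}(K')}\mathcal{C}(K),\qquad f(\psi(K))=\pm\psi(K')+\delta\theta'\ \text{in }\mathcal{F}_{\mathit{sl}(K')}\mathcal{C}(K').\]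
   Context: Bar-Natan complex. Let $V=\mathbb{Z}\langle x_+,x_-\rangle$ with multiplication $m(x_+\otimes x_+)=x_+$, $m(x_+\otimes x_-)=m(x_-\otimes x_+)=x_-$, $m(x_-\otimes x_-)=x_-$, and comultiplication $\Delta(x_-)=x_-\otimes x_-$, $\Delta(x_+)=x_+\otimes x_-+x_-\otimes x_+-x_+\otimes x_+$. Put $x_{|}=x_--x_+$. For an oriented link diagram $K$ with $n$ ordered crossings ($n_+$ positive, $n_-$ negative), complete resolutions $K_v$ are indexed by $v\in\{0,1\}^n$, the orientation-respecting smoothing being the $0$-resolution at positive and the $1$-resolution at negative crossings. $\mathcal{C}(K)$ is freely generated by pairs $(v,x)$, $x$ a labeling of circles of $K_v$ by $x_\pm$, with Khovanov's cube-of-resolutions differential $\delta$ built from this $m,\Delta$. Gradings: $\mathrm{gr}_h(v,x)=-n_-+|v|$ ($\mathcal{C}^i$ = degree $i$), $\mathrm{gr}_q(v,x)=n_+-2n_-+|v|+\#x_+-\#x_-$ (not decreased by $\delta$); $\mathcal{F}_j\mathcal{C}$ = span of generators with $\mathrm{gr}_q\ge j$. For an orientation $o$, $\psi(o)$ is the cycle over the oriented resolution labeling each circle $C$ by $x_-$ or $x_{|}$ according as an arc from a point just to the left of $C$ to $\infty$ meets an even or odd number of circles. For $K$ the closure of a braid in $B_m$ with braid orientation $o$, $\psi^+(K)=\psi(o)$, $\psi^-(K)=\psi(-o)$, both in $\mathcal{F}_{\mathit{sl}(K)}\mathcal{C}^0(K)$, $\mathit{sl}(K)=n_+-n_--m$.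 Negative stabilization replaces the braid $B\in B_m$ by $B\sigma_m^{-1}\in B_{m+1}$, i.e. a negative Reidemeister I move with new crossing $c$. With $K'$ the stabilized diagram, $(K')_0\cong K$ and $(K')_1\cong K\sqcup U_0$ (resolving $c$); the generators of $\mathcal{C}((K')_1)$ with $U_0$ labeled $x_+$ span a subcomplex $D$ identified with $\mathcal{C}(K)$ (forgetting $U_0$, preserving gradings). The stabilization map $f$ is the inclusion $\mathcal{C}(K)\cong D\hookrightarrow\mathcal{C}(K')$; the remaining generators cancel in pairs via the arrows $x\mapsto x\otimes x_-$, and $g$ is the resulting filtered homotopy inverse. Locality: an element is local if it lies over vertices agreeing with the oriented-resolution vertex away from the new crossing and its labels on circles away from the stabilization region agree with those of the corresponding canonical cycle. *)

theory Defs
  imports Main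
begin

text \<open>Crossing k (0 <= k < length w) is the k-th letter.
  For the braid orientation (strands oriented upwards), sigma_i gives a positive crossing.\<close>

datatype bgen = Sig nat | SigInv nat

fun bidx :: "bgen \<Rightarrow> nat" where
  "bidx (Sig i) = i" | "bidx (SigInv i) = i"

fun bpos :: "bgen \<Rightarrow> bool" where
  "bpos (Sig i) = True" | "bpos (SigInv i) = False"

definition braid_word :: "nat \<Rightarrow> bgen list \<Rightarrow> bool" where
  "braid_word m w \<longleftrightarrow> (\<forall>e\<in>set w. 1 \<le> bidx e \<and> bidx e < m)"

definition npos :: "bgen list \<Rightarrow> nat" where
  "npos w = length (filter bpos w)"

definition nneg :: "bgen list \<Rightarrow> nat" where
  "nneg w = length (filter (\<lambda>e. \<not> bpos e) w)"

definition sl :: "bgen list \<Rightarrow> nat \<Rightarrow> int" where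
  "sl w m = int (npos w) - int (nneg w) - int m"

text \<open>Points (k, j): level k in {0..length w} (level k lies just below crossing k),
  strand position j in {1..m}. The closure joins level length w to level 0, the
  closing arcs running around to the right, so strand 1 is the outermost circle.
  A vertex v is the set of crossings resolved by the 1-resolution. The
  0-resolution of a positive crossing and the 1-resolution of a negative crossing
  are the oriented (vertical) smoothings.\<close>

definition pts :: "bgen list \<Rightarrow> nat \<Rightarrow> (nat \<times> nat) set" where
  "pts w m = {0..length w} \<times> {1..m}"

definition vertical :: "bgen list \<Rightarrow> nat set \<Rightarrow> nat \<Rightarrow> bool" where
  "vertical w v k \<longleftrightarrow> ((k \<in> v) = (\<not> bpos (w ! k)))"

definition adj :: "bgen list \<Rightarrow> nat \<Rightarrow> nat set \<Rightarrow> ((nat \<times> nat) \<times> (nat \<times> nat)) set" where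
  "adj w m v =
     {((k, j), (Suc k, j)) | k j. k < length w \<and> 1 \<le> j \<and> j \<le> m
          \<and> j \<noteq> bidx (w ! k) \<and> j \<noteq> Suc (bidx (w ! k))}
   \<union> {((k, j), (Suc k, j)) | k j. k < length w \<and> vertical w v k
          \<and> (j = bidx (w ! k) \<or> j = Suc (bidx (w ! k)))}
   \<union> {((k, bidx (w ! k)), (k, Suc (bidx (w ! k)))) | k. k < length w \<and> \<not> vertical w v k}
   \<union> {((Suc k, bidx (w ! k)), (Suc k, Suc (bidx (w ! k)))) | k. k < length w \<and> \<not> vertical w v k}
   \<union> {((length w, j), (0, j)) | j. 1 \<le> j \<and> j \<le> m}"

definition conn :: "bgen list \<Rightarrow> nat \<Rightarrow> nat set \<Rightarrow> ((nat \<times> nat) \<times> (nat \<times> nat)) set" where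
  "conn w m v = (adj w m v \<union> (adj w m v)\<inverse>)\<^sup>*"

definition circles :: "bgen list \<Rightarrow> nat \<Rightarrow> nat set \<Rightarrow> (nat \<times> nat) set set" where
  "circles w m v = {{q \<in> pts w m. (p, q) \<in> conn w m v} | p. p \<in> pts w m}"

section \<open>The Bar-Natan complex\<close>

text \<open>A generator (v, P): a vertex v together with a labeling of the circles of K_v,
  encoded by the set P of circles labeled x_+ (all others are labeled x_-).\<close>

type_synonym gen = "nat set \<times> (nat \<times> nat) set set"
type_synonym chain = "gen \<Rightarrow> int"

definition gens :: "bgen list \<Rightarrow> nat \<Rightarrow> gen set" where
  "gens w m = {(v, P). v \<subseteq> {..<length w} \<and> P \<subseteq> circles w m v}"

definition grh :: "bgen list \<Rightarrow> gen \<Rightarrow> int" where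
  "grh w g = int (card (fst g)) - int (nneg w)"

definition grq :: "bgen list \<Rightarrow> nat \<Rightarrow> gen \<Rightarrow> int" where
  "grq w m g = int (npos w) - 2 * int (nneg w) + int (card (fst g))
      + int (card (snd g)) - int (card (circles w m (fst g) - snd g))"

text \<open>Coefficient of the edge map (merge m or split Delta) from (v,P) to (v',P').\<close>
definition edge_coef :: "bgen list \<Rightarrow> nat \<Rightarrow> gen \<Rightarrow> gen \<Rightarrow> int" where
  "edge_coef w m g g' =
    (let A = circles w m (fst g); B = circles w m (fst g'); P = snd g; P' = snd g';
         Old = A - B; N = B - A in
     if P \<inter> (A \<inter> B) \<noteq> P' \<inter> (A \<inter> B) then 0
     else if card Old = 2 \<and> card N = 1 then (if (N \<subseteq> P') = (Old \<subseteq> P) then 1 else 0)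
     else if card Old = 1 \<and> card N = 2 then
       (if Old \<subseteq> P then
          (if card (N \<inter> P') = 1 then 1 else if card (N \<inter> P') = 2 then -1 else 0)
        else (if N \<inter> P' = {} then 1 else 0))
     else 0)"

definition dcoef :: "bgen list \<Rightarrow> nat \<Rightarrow> gen \<Rightarrow> gen \<Rightarrow> int" where
  "dcoef w m g g' =
    (if g \<in> gens w m \<and> g' \<in> gens w m then
       (\<Sum>c \<in> {..<length w} - fst g.
          if fst g' = insert c (fst g)
          then (-1) ^ card {c' \<in> fst g. c' < c} * edge_coef w m g g' else 0)
     else 0)"

definition khdiff :: "bgen list \<Rightarrow> nat \<Rightarrow> chain \<Rightarrow> chain" where
  "khdiff w m z = (\<lambda>g'. \<Sum>g \<in> gens w m. z g * dcoef w m g g')"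

text \<open>z lies in F_j C^i.\<close>
definition in_F :: "bgen list \<Rightarrow> nat \<Rightarrow> int \<Rightarrow> int \<Rightarrow> chain \<Rightarrow> bool" where
  "in_F w m j i z \<longleftrightarrow> (\<forall>g. z g \<noteq> 0 \<longrightarrow> g \<in> gens w m \<and> grh w g = i \<and> grq w m g \<ge> j)"

section \<open>The canonical cycles psi^+ and psi^-\<close>

definition vo :: "bgen list \<Rightarrow> nat set" where
  "vo w = {k. k < length w \<and> \<not> bpos (w ! k)}"

definition strand_circle :: "bgen list \<Rightarrow> nat \<Rightarrow> (nat \<times> nat) set" where
  "strand_circle w j = {0..length w} \<times> {j}"

text \<open>At the oriented resolution the circles are the concentric strand circles,
  strand 1 outermost. For the braid orientation (b = True) the left side of each
  circle is its outside, so circle j is labeled x_| iff j is even; for the reversed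
  orientation (b = False) the left side is the inside and circle j is labeled x_|
  iff j is odd. bar_circ is the set of circles labeled x_| = x_- - x_+.\<close>
definition bar_circ :: "bgen list \<Rightarrow> nat \<Rightarrow> bool \<Rightarrow> (nat \<times> nat) set set" where
  "bar_circ w m b = {strand_circle w j | j. 1 \<le> j \<and> j \<le> m \<and> even j = b}"

text \<open>psi w m True = psi^+, psi w m False = psi^-.\<close>
definition psi :: "bgen list \<Rightarrow> nat \<Rightarrow> bool \<Rightarrow> chain" where
  "psi w m b = (\<lambda>g. if fst g = vo w \<and> snd g \<subseteq> bar_circ w m b
                     then (-1) ^ card (snd g) else 0)"

text \<open>Coefficient of the basis label (x_+ iff inP) in the canonical label of C.\<close>
definition canon_coef :: "bgen list \<Rightarrow> nat \<Rightarrow> bool \<Rightarrow> (nat \<times> nat) set \<Rightarrow> bool \<Rightarrow> int" where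
  "canon_coef w m b C inP =
    (if C \<in> bar_circ w m b then (if inP then -1 else 1)
     else if (\<exists>j. 1 \<le> j \<and> j \<le> m \<and> C = strand_circle w j) then (if inP then 0 else 1)
     else 0)"

text \<open>z is local w.r.t. the crossings S of the stabilization region and the set Q of
  points of the stabilization region: z lies over vertices agreeing with the oriented
  vertex outside S, and on the circles not meeting Q, z is the tensor product of the
  canonical labels with some element on the remaining circles.\<close>
definition is_local :: "bgen list \<Rightarrow> nat \<Rightarrow> bool \<Rightarrow> nat set \<Rightarrow> (nat \<times> nat) set \<Rightarrow> chain \<Rightarrow> bool" where
  "is_local w m b S Q z \<longleftrightarrow>
     (\<forall>g. z g \<noteq> 0 \<longrightarrow> g \<in> gens w m \<and> (\<forall>k < length w. k \<notin> S \<longrightarrow> (k \<in> fst g \<longleftrightarrow> k \<in> vo w))) \<and>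
     (\<exists>u. \<forall>v P. (v, P) \<in> gens w m \<and> (\<forall>k < length w. k \<notin> S \<longrightarrow> (k \<in> v \<longleftrightarrow> k \<in> vo w)) \<longrightarrow>
        z (v, P) = u v (P \<inter> {C \<in> circles w m v. C \<inter> Q \<noteq> {}})
                   * (\<Prod>C \<in> {C \<in> circles w m v. C \<inter> Q = {}}. canon_coef w m b C (C \<in> P)))"

section \<open>Negative stabilization and the maps f, g\<close>

text \<open>K' is the closure of w @ [SigInv m] in B_(m+1); its new crossing is c = length w.
  U0 is the new strand circle of (K')_1; lift C is the circle of (K')_1 corresponding
  to the circle C of K.\<close>

definition U0 :: "bgen list \<Rightarrow> nat \<Rightarrow> (nat \<times> nat) set" where
  "U0 w m = {0..Suc (length w)} \<times> {Suc m}"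

definition lift :: "bgen list \<Rightarrow> (nat \<times> nat) set \<Rightarrow> (nat \<times> nat) set" where
  "lift w C = C \<union> {(Suc (length w), j) | j. (length w, j) \<in> C}"

text \<open>The generator of D corresponding to a generator of C(K).\<close>
definition Dgen :: "bgen list \<Rightarrow> nat \<Rightarrow> gen \<Rightarrow> gen" where
  "Dgen w m g = (insert (length w) (fst g), insert (U0 w m) (lift w ` snd g))"

text \<open>f: the inclusion C(K) = D into C(K').\<close>
definition stab_f :: "bgen list \<Rightarrow> nat \<Rightarrow> chain \<Rightarrow> chain" where
  "stab_f w m z = (\<lambda>g'. \<Sum>g \<in> gens w m. z g * (if g' = Dgen w m g then 1 else 0))"

text \<open>The identification D = C(K) (forgetting U0), applied to a chain of K'.\<close>
definition iso_D :: "bgen list \<Rightarrow> nat \<Rightarrow> chain \<Rightarrow> chain" where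
  "iso_D w m z = (\<lambda>g. if g \<in> gens w m then z (Dgen w m g) else 0)"

definition projD :: "bgen list \<Rightarrow> nat \<Rightarrow> chain \<Rightarrow> chain" where
  "projD w m z = (\<lambda>g. if g \<in> gens (w @ [SigInv m]) (Suc m) \<and> length w \<in> fst g \<and> U0 w m \<in> snd g
                       then z g else 0)"

definition projF :: "bgen list \<Rightarrow> nat \<Rightarrow> chain \<Rightarrow> chain" where
  "projF w m z = (\<lambda>g. if g \<in> gens (w @ [SigInv m]) (Suc m) \<and> length w \<in> fst g \<and> U0 w m \<notin> snd g
                       then z g else 0)"

text \<open>The inverse of the cancelled arrows x \<mapsto> x \<otimes> x_-: the components of the differential
  of C(K') from E (generators with c 0-resolved) to F (c 1-resolved, U0 labeled x_-).\<close>
definition phi_inv :: "bgen list \<Rightarrow> nat \<Rightarrow> chain \<Rightarrow> chain" where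
  "phi_inv w m = (THE h.
      (\<forall>z g. h z g \<noteq> 0 \<longrightarrow> g \<in> gens (w @ [SigInv m]) (Suc m) \<and> length w \<notin> fst g) \<and>
      (\<forall>z. projF w m z = z \<longrightarrow> projF w m (khdiff (w @ [SigInv m]) (Suc m) (h z)) = z) \<and>
      (\<forall>z. h z = h (projF w m z)))"

text \<open>g: the homotopy inverse produced by the cancellation,
  g = pi_D - pi_D delta phi^{-1} pi_F, followed by D = C(K).\<close>
definition stab_g :: "bgen list \<Rightarrow> nat \<Rightarrow> chain \<Rightarrow> chain" where
  "stab_g w m y = iso_D w m (\<lambda>g. projD w m y g
       - projD w m (khdiff (w @ [SigInv m]) (Suc m) (phi_inv w m (projF w m y))) g)"

end

theory Submission
  imports Defs
begin

text \<open>Resolving the new crossing c splits the generators of C(K') into E (c 0-resolved) and F, D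
  (c 1-resolved, the new circle U0 labelled x_- resp. x_+). The arrows E \<rightarrow> F, x \<mapsto> x \<otimes> x_-, are
  isomorphisms, so g is explicit: g(y)(x) = y(x \<otimes> x_+) \<mp> y(x' \<otimes> x_-), where x' puts x_+ on the
  circle C0 of K through the stabilization point. In psi(K') the strands of C0 and U0 are adjacent,
  so one of them carries x_- and the other x_|; hence exactly one of the two terms survives and
  g(psi(K')) = \<plusminus>psi(K) on the nose. For f, the difference f(psi(K)) \<mp> psi(K') is the boundary of
  a copy theta of psi(K) placed over the 0-resolution of c: its differential into F and D is given by
  the same two arrows, and its components towards the other vertices (changing a positive crossing
  of K) cancel in pairs, since there an x_| strand is merged with an x_- strand and x_- is
  absorbing.\<close>

lemma inj_on_image_subset_iff:
  assumes "inj_on f C" "A \<subseteq> C" "B \<subseteq> C"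
  shows "f ` A \<subseteq> f ` B \<longleftrightarrow> A \<subseteq> B"
proof
  assume h: "f ` A \<subseteq> f ` B"
  show "A \<subseteq> B"
  proof
    fix x assume "x \<in> A"
    hence "f x \<in> f ` B" using h by blast
    thus "x \<in> B" using inj_on_image_mem_iff[OF assms(1) _ assms(3)] \<open>x \<in> A\<close> assms(2) by blast
  qed
qed blast

lemma prod_sign_labels: assumes "finite A" "P \<subseteq> A"
  shows "(\<Prod>C\<in>A. if C \<in> T then (if C \<in> P then -1 else 1) else (if C \<in> P then 0 else (1::int)))
     = (if P \<subseteq> T then (-1)^card P else 0)"
proof (cases "P \<subseteq> T")
  case True
  have "(\<Prod>C\<in>A. if C \<in> T then (if C \<in> P then -1 else 1) else (if C \<in> P then 0 else (1::int)))
      = (\<Prod>C\<in>A. if C \<in> P then -1 else (1::int))"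
    by (rule prod.cong) (use True in auto)
  also have "\<dots> = (\<Prod>C\<in>A \<inter> {x. x \<in> P}. -1) * (\<Prod>C\<in>A \<inter> - {x. x \<in> P}. 1)"
    by (rule prod.If_cases[OF assms(1)])
  also have "A \<inter> {x. x \<in> P} = P" using assms(2) by auto
  finally show ?thesis using True by simp
next
  case False
  then obtain C where "C \<in> P" "C \<notin> T" by auto
  hence "(\<Prod>C\<in>A. if C \<in> T then (if C \<in> P then -1 else 1) else (if C \<in> P then 0 else (1::int))) = 0"
    using assms by (intro prod_zero) auto
  thus ?thesis using False by simp
qed

lemma sum_insert_new_crossing: assumes "v1 \<subseteq> {..<L}" "v \<subseteq> {..<L}"
  shows "(\<Sum>c\<in>{..<Suc L} - v1. if insert L v = insert c v1 then f c else (0::int)) = (if v = v1 then f L else 0)"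
proof (cases "v = v1")
  case True
  have "(\<Sum>c\<in>{..<Suc L} - v1. if insert L v = insert c v1 then f c else 0)
      = (\<Sum>c\<in>{..<Suc L} - v1. if c = L then f c else 0)"
  proof (rule sum.cong)
    fix c assume c: "c \<in> {..<Suc L} - v1"
    have "insert L v = insert c v1 \<longleftrightarrow> c = L"
    proof
      assume "insert L v = insert c v1"
      hence "c \<in> insert L v" by auto
      thus "c = L" using c True by auto
    qed (use True in auto)
    thus "(if insert L v = insert c v1 then f c else 0) = (if c = L then f c else 0)" by simp
  qed simp
  also have "\<dots> = f L" using assms(1) by (subst sum.delta) auto
  finally show ?thesis using True by simp
next
  case False
  have "\<And>c. insert L v \<noteq> insert c v1"
  proof
    fix c assume h: "insert L v = insert c v1"
    hence "L \<in> insert c v1" by auto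
    hence "c = L" using assms(1) by auto
    hence "v = v1" using h assms by (metis insert_ident lessThan_iff less_irrefl subset_iff)
    thus False using False by simp
  qed
  thus ?thesis using False by simp
qed

section \<open>Circles of a complete resolution\<close>

definition circle_through :: "bgen list \<Rightarrow> nat \<Rightarrow> nat set \<Rightarrow> nat \<times> nat \<Rightarrow> (nat \<times> nat) set" where
  "circle_through w m v p = {q \<in> pts w m. (p,q) \<in> conn w m v}"

lemma circles_eq_circle_through: "circles w m v = circle_through w m v ` pts w m"
  unfolding circles_def circle_through_def by auto

lemma conn_refl: "(p,p) \<in> conn w m v"
  unfolding conn_def by simp

lemma conn_sym: "(p,q) \<in> conn w m v \<Longrightarrow> (q,p) \<in> conn w m v"
proof -
  assume "(p,q) \<in> conn w m v"
  hence "(q,p) \<in> ((adj w m v \<union> (adj w m v)\<inverse>)\<inverse>)\<^sup>*" unfolding conn_def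
    by (simp add: rtrancl_converseI)
  thus ?thesis unfolding conn_def by (simp add: converse_Un Un_commute)
qed

lemma conn_trans: "(p,q) \<in> conn w m v \<Longrightarrow> (q,r) \<in> conn w m v \<Longrightarrow> (p,r) \<in> conn w m v"
  unfolding conn_def by (rule rtrancl_trans)

lemma adj_imp_conn: "(p,q) \<in> adj w m v \<Longrightarrow> (p,q) \<in> conn w m v"
  unfolding conn_def by auto

lemma adj_imp_conn_rev: "(p,q) \<in> adj w m v \<Longrightarrow> (q,p) \<in> conn w m v"
  using adj_imp_conn conn_sym by blast

lemma conn_column: assumes "\<And>t. a \<le> t \<Longrightarrow> t < b \<Longrightarrow> ((t,j),(Suc t,j)) \<in> adj w m v" "a \<le> b"
  shows "((a,j),(b,j)) \<in> conn w m v"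
  using assms proof (induction b)
  case 0 thus ?case by (simp add: conn_refl)
next
  case (Suc b) show ?case proof (cases "a = Suc b")
    case True thus ?thesis by (simp add: conn_refl)
  next
    case False
    hence "((a,j),(b,j)) \<in> conn w m v" using Suc by auto
    moreover have "((b,j),(Suc b,j)) \<in> conn w m v"
      using Suc.prems(1)[of b] False Suc.prems(2) adj_imp_conn by auto
    ultimately show ?thesis using conn_trans by blast
  qed
qed

lemma rtrancl_map_image: assumes "(p,q) \<in> R\<^sup>*" "\<And>x y. (x,y) \<in> R \<Longrightarrow> (f x, f y) \<in> S\<^sup>*"
  shows "(f p, f q) \<in> S\<^sup>*"
  using assms(1) by (induction rule: rtrancl_induct) (auto intro: rtrancl_trans assms(2))

lemma conn_map: assumes "(p,q) \<in> conn w m v"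
  "\<And>x y. (x,y) \<in> adj w m v \<Longrightarrow> (f x, f y) \<in> conn w' m' v'"
  shows "(f p, f q) \<in> conn w' m' v'"
proof -
  have "(f p, f q) \<in> (adj w' m' v' \<union> (adj w' m' v')\<inverse>)\<^sup>*"
  proof (rule rtrancl_map_image[where R="adj w m v \<union> (adj w m v)\<inverse>" and f=f])
    show "(p, q) \<in> (adj w m v \<union> (adj w m v)\<inverse>)\<^sup>*" using assms(1) by (simp add: conn_def)
  next
    fix x y assume "(x, y) \<in> adj w m v \<union> (adj w m v)\<inverse>"
    thus "(f x, f y) \<in> (adj w' m' v' \<union> (adj w' m' v')\<inverse>)\<^sup>*"
      using assms(2) conn_sym unfolding conn_def by blast
  qed
  thus ?thesis unfolding conn_def .
qed

lemma circle_subset_pts: "C \<in> circles w m v \<Longrightarrow> C \<subseteq> pts w m"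
  unfolding circles_def by auto

lemma circle_through_self: "a \<in> pts w m \<Longrightarrow> a \<in> circle_through w m v a"
  unfolding circle_through_def using conn_refl by auto

lemma circle_through_eq:
  assumes "b \<in> circle_through w m v a"
  shows "circle_through w m v b = circle_through w m v a"
proof -
  have ab: "(a,b) \<in> conn w m v" using assms unfolding circle_through_def by auto
  show ?thesis unfolding circle_through_def using ab conn_sym conn_trans by blast
qed

lemma circle_eq_circle_through: "C \<in> circles w m v \<Longrightarrow> a \<in> C \<Longrightarrow> C = circle_through w m v a"
proof -
  assume "C \<in> circles w m v" "a \<in> C"
  then obtain b where "b \<in> pts w m" "C = circle_through w m v b" "a \<in> circle_through w m v b"
    by (auto simp: circles_eq_circle_through)
  thus ?thesis using circle_through_eq by metis
qed

lemma finite_pts: "finite (pts w m)"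
  unfolding pts_def by auto

lemma finite_circles: "finite (circles w m v)"
proof -
  have "circles w m v \<subseteq> Pow (pts w m)" using circle_subset_pts by blast
  thus ?thesis using finite_pts finite_subset by blast
qed

lemma finite_gens: "finite (gens w m)"
proof -
  have "gens w m \<subseteq> Pow {..<length w} \<times> Pow (Pow (pts w m))"
  proof
    fix g assume "g \<in> gens w m"
    then obtain v P where "g = (v,P)" "v \<subseteq> {..<length w}" "P \<subseteq> circles w m v" unfolding gens_def
      by auto
    thus "g \<in> Pow {..<length w} \<times> Pow (Pow (pts w m))" using circle_subset_pts by blast
  qed
  thus ?thesis using finite_pts finite_subset by blast
qed

lemma adj_vertical_arc: "k < length w \<Longrightarrow> 1 \<le> j \<Longrightarrow> j \<le> m \<Longrightarrow>
   (j \<noteq> bidx (w!k) \<and> j \<noteq> Suc (bidx (w!k))) \<or> vertical w v k \<Longrightarrow> ((k,j),(Suc k,j)) \<in> adj w m v"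
  unfolding adj_def by (simp; blast)

lemma adj_closing_arc: "1 \<le> j \<Longrightarrow> j \<le> m \<Longrightarrow> ((length w, j),(0,j)) \<in> adj w m v"
  unfolding adj_def by simp

lemma adj_lower_cap:
  "k < length w \<Longrightarrow> \<not> vertical w v k \<Longrightarrow> ((k, bidx(w!k)),(k, Suc(bidx(w!k)))) \<in> adj w m v"
  unfolding adj_def by simp

lemma adj_upper_cap:
  "k < length w \<Longrightarrow> \<not> vertical w v k \<Longrightarrow> ((Suc k, bidx(w!k)),(Suc k, Suc(bidx(w!k)))) \<in> adj w m v"
  unfolding adj_def by simp

lemma braid_word_bidx: "braid_word m w \<Longrightarrow> k < length w \<Longrightarrow> 1 \<le> bidx (w!k) \<and> bidx (w!k) < m"
  unfolding braid_word_def by auto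

lemma adj_cases: "(p,q) \<in> adj w m v \<Longrightarrow>
 (\<exists>k j. p=(k,j) \<and> q=(Suc k,j) \<and> k<length w \<and> 1\<le>j \<and> j\<le>m \<and> j\<noteq>bidx(w!k) \<and> j\<noteq>Suc(bidx(w!k))) \<or>
 (\<exists>k j. p=(k,j) \<and> q=(Suc k,j) \<and> k<length w \<and> vertical w v k \<and> j \<in> {bidx(w!k), Suc(bidx(w!k))}) \<or>
 (\<exists>k. p=(k,bidx(w!k)) \<and> q=(k,Suc(bidx(w!k))) \<and> k<length w \<and> \<not>vertical w v k) \<or>
 (\<exists>k. p=(Suc k,bidx(w!k)) \<and> q=(Suc k,Suc(bidx(w!k))) \<and> k<length w \<and> \<not>vertical w v k) \<or>
 (\<exists>j. p=(length w,j) \<and> q=(0,j) \<and> 1\<le>j \<and> j\<le>m)"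
  unfolding adj_def by auto

lemma adj_in_pts: assumes "braid_word m w" "(p,q) \<in> adj w m v"
  shows "p \<in> pts w m \<and> q \<in> pts w m"
  using adj_cases[OF assms(2)] braid_word_bidx[OF assms(1)] unfolding pts_def
  by (elim disjE exE conjE; force)

lemma conn_in_pts: assumes "braid_word m w" "(p,q) \<in> conn w m v" "p \<in> pts w m" shows "q \<in> pts w m"
  using assms(2,3) unfolding conn_def
  by (induction rule: rtrancl_induct) (use adj_in_pts[OF assms(1)] in blast)+

lemma conn_outside_pts: assumes "braid_word m w" "(p,q) \<in> conn w m v" "p \<notin> pts w m" shows "q = p"
  using assms(2,3) unfolding conn_def
  by (induction rule: rtrancl_induct) (use adj_in_pts[OF assms(1)] in blast)+

section \<open>The oriented resolution\<close>

lemma vertical_vo: "k < length w \<Longrightarrow> vertical w (vo w) k"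
  unfolding vertical_def vo_def by simp

lemma adj_vo_snd: "(p,q) \<in> adj w m (vo w) \<Longrightarrow> snd p = snd q"
  using adj_cases[of p q w m "vo w"] vertical_vo by auto

lemma conn_vo_snd: "(p,q) \<in> conn w m (vo w) \<Longrightarrow> snd p = snd q"
  unfolding conn_def by (induction rule: rtrancl_induct) (auto dest: adj_vo_snd)

lemma conn_vo_column: "1 \<le> j \<Longrightarrow> j \<le> m \<Longrightarrow> a \<le> b \<Longrightarrow> b \<le> length w \<Longrightarrow> ((a,j),(b,j)) \<in> conn w m (vo w)"
  by (rule conn_column) (auto intro!: adj_vertical_arc vertical_vo)

lemma circle_through_vo:
  assumes "(k,j) \<in> pts w m"
  shows "circle_through w m (vo w) (k,j) = strand_circle w j"
proof
  show "circle_through w m (vo w) (k,j) \<subseteq> strand_circle w j"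
    unfolding circle_through_def strand_circle_def pts_def using conn_vo_snd by fastforce
next
  show "strand_circle w j \<subseteq> circle_through w m (vo w) (k,j)"
  proof
    fix q assume q: "q \<in> strand_circle w j"
    then obtain k' where q': "q = (k',j)" "k' \<le> length w" unfolding strand_circle_def by auto
    have j: "1 \<le> j" "j \<le> m" "k \<le> length w" using assms unfolding pts_def by auto
    have "((k,j),(0,j)) \<in> conn w m (vo w)" using conn_vo_column[of j m 0 k w] j conn_sym by auto
    moreover have "((0,j),(k',j)) \<in> conn w m (vo w)" using conn_vo_column[of j m 0 k' w] j q'
      by auto
    ultimately have "((k,j),q) \<in> conn w m (vo w)" using conn_trans q' by blast
    moreover have "q \<in> pts w m" using q' j unfolding pts_def by auto
    ultimately show "q \<in> circle_through w m (vo w) (k,j)" unfolding circle_through_def by auto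
  qed
qed

lemma circles_vo: "circles w m (vo w) = strand_circle w ` {1..m}"
proof -
  have "circle_through w m (vo w) ` pts w m = strand_circle w ` {1..m}"
  proof
    show "circle_through w m (vo w) ` pts w m \<subseteq> strand_circle w ` {1..m}"
      using circle_through_vo unfolding pts_def by fastforce
    show "strand_circle w ` {1..m} \<subseteq> circle_through w m (vo w) ` pts w m"
    proof
      fix C assume "C \<in> strand_circle w ` {1..m}"
      then obtain j where j: "j \<in> {1..m}" "C = strand_circle w j" by auto
      hence "(0,j) \<in> pts w m" unfolding pts_def by auto
      thus "C \<in> circle_through w m (vo w) ` pts w m" using circle_through_vo[of 0 j w m] j by force
    qed
  qed
  thus ?thesis by (simp add: circles_eq_circle_through)
qed

lemma strand_circle_eq_iff: "strand_circle w i = strand_circle w j \<longleftrightarrow> i = j"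
  unfolding strand_circle_def by auto

lemma strand_circle_in_circles_vo: "1 \<le> j \<Longrightarrow> j \<le> m \<Longrightarrow> strand_circle w j \<in> circles w m (vo w)"
  unfolding circles_vo by auto

lemma strand_circle_subset_pts: "1 \<le> j \<Longrightarrow> j \<le> m \<Longrightarrow> strand_circle w j \<subseteq> pts w m"
  using strand_circle_in_circles_vo circle_subset_pts by blast

lemma strand_circle_in_bar_circ_iff:
  assumes "1 \<le> j" "j \<le> m" shows "strand_circle w j \<in> bar_circ w m b \<longleftrightarrow> even j = b"
  unfolding bar_circ_def using assms strand_circle_eq_iff by auto

lemma bar_circ_subset_circles_vo: "bar_circ w m b \<subseteq> circles w m (vo w)"
  unfolding bar_circ_def circles_vo by auto

lemma vo_subset: "vo w \<subseteq> {..<length w}"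
  unfolding vo_def by auto

lemma card_vo: "card (vo w) = nneg w"
  unfolding vo_def nneg_def using length_filter_conv_card[of "\<lambda>e. \<not> bpos e" w] by simp

lemma psi_in_gens: "psi w m b g \<noteq> 0 \<Longrightarrow> g \<in> gens w m"
  using vo_subset[of w] bar_circ_subset_circles_vo[of w m b] unfolding psi_def gens_def
  by (cases g) (fastforce split: if_splits)

section \<open>Circles of the stabilized diagram\<close>

abbreviation stab_word :: "bgen list \<Rightarrow> nat \<Rightarrow> bgen list" where
  "stab_word w m \<equiv> w @ [SigInv m]"

lemma stab_word_nth: "k < length w \<Longrightarrow> stab_word w m ! k = w ! k"
  by (simp add: nth_append)

lemma vo_stab_word: "vo (stab_word w m) = insert (length w) (vo w)"
  unfolding vo_def by (auto simp: nth_append less_Suc_eq)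

lemma nneg_stab_word: "nneg (stab_word w m) = Suc (nneg w)"
  unfolding nneg_def by simp

lemma npos_stab_word: "npos (stab_word w m) = npos w"
  unfolding npos_def by simp

lemma strand_circle_stab_word: "strand_circle (stab_word w m) j = lift w (strand_circle w j)"
  unfolding strand_circle_def lift_def by (auto simp: le_Suc_eq)

lemma U0_eq_strand_circle: "U0 w m = strand_circle (stab_word w m) (Suc m)"
  unfolding U0_def strand_circle_def by simp

lemma bar_circ_stab_word:
  "bar_circ (stab_word w m) (Suc m) b = lift w ` bar_circ w m b \<union> (if even (Suc m) = b then {U0 w m} else {})"
  unfolding bar_circ_def U0_eq_strand_circle strand_circle_stab_word by (auto simp: le_Suc_eq)

text \<open>The circles of a resolution of the stabilized diagram are the preimages of circles of K
  under collapse, which squeezes level L+1 onto level L and sends the new strand m+1 to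
  the point (L, m) if the new crossing c is 0-resolved (U0 merges into the circle through (L, m)),
  and to the isolated point (0, m+1) outside the diagram of K if c is 1-resolved (U0 is a circle
  of its own).\<close>

definition collapse :: "nat \<Rightarrow> nat \<Rightarrow> bool \<Rightarrow> nat \<times> nat \<Rightarrow> nat \<times> nat" where
  "collapse L m c_res1 p =
     (if snd p = Suc m then (if c_res1 then (0, Suc m) else (L, m)) else (min (fst p) L, snd p))"

definition lift0 :: "bgen list \<Rightarrow> nat \<Rightarrow> (nat \<times> nat) set \<Rightarrow> (nat \<times> nat) set" where
  "lift0 w m C = lift w C \<union> (if (length w, m) \<in> C then U0 w m else {})"

locale stab_vertex =
  fixes w :: "bgen list" and m :: nat and v :: "nat set" and V :: "nat set"
  assumes bw: "braid_word m w" and m1: "1 \<le> m"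
    and VV: "\<And>k. k < length w \<Longrightarrow> k \<in> V \<longleftrightarrow> k \<in> v"
begin

abbreviation "L \<equiv> length w"
abbreviation "c_res1 \<equiv> L \<in> V"
abbreviation "proj \<equiv> collapse L m c_res1"
abbreviation "w' \<equiv> stab_word w m"

lemma vertical_stab_word: "k < L \<Longrightarrow> vertical w' V k = vertical w v k"
  unfolding vertical_def using VV by (simp add: nth_append)

lemma vertical_new_crossing: "vertical w' V L = c_res1"
  unfolding vertical_def by simp

lemma bidx_bounds: "k < L \<Longrightarrow> 1 \<le> bidx (w!k) \<and> bidx (w!k) < m"
  using braid_word_bidx[OF bw] .

lemma conn_top_column: "a \<le> b \<Longrightarrow> b \<le> L \<Longrightarrow> ((a,Suc m),(b, Suc m)) \<in> conn w' (Suc m) V"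
proof (rule conn_column)
  fix t assume "a \<le> t" "t < b" "b \<le> L"
  hence t: "t < L" by simp
  show "((t, Suc m), Suc t, Suc m) \<in> adj w' (Suc m) V"
    using bidx_bounds[OF t] t by (intro adj_vertical_arc) (auto simp: stab_word_nth[OF t])
qed

lemma conn_across_new_crossing:
  assumes "1 \<le> j" "j \<le> m"
  shows "((L,j),(Suc L,j)) \<in> conn w' (Suc m) V"
proof (cases "j < m \<or> c_res1")
  case True
  have "((L,j),(Suc L,j)) \<in> adj w' (Suc m) V"
    using adj_vertical_arc[of L w' j "Suc m" V] True assms vertical_new_crossing by auto
  thus ?thesis by (rule adj_imp_conn)
next
  case False
  hence jm: "j = m" and nv: "\<not> c_res1" using assms by auto
  have 1: "((L,m),(L,Suc m)) \<in> conn w' (Suc m) V"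
    using adj_lower_cap[of L w' V "Suc m"] nv vertical_new_crossing by (auto intro: adj_imp_conn)
  have 2: "((L,Suc m),(0,Suc m)) \<in> conn w' (Suc m) V" using conn_top_column[of 0 L] conn_sym
    by blast
  have 3: "((0,Suc m),(Suc L,Suc m)) \<in> conn w' (Suc m) V"
    using adj_closing_arc[of "Suc m" "Suc m" w' V] by (auto intro: adj_imp_conn_rev)
  have 4: "((Suc L,Suc m),(Suc L, m)) \<in> conn w' (Suc m) V"
    using adj_upper_cap[of L w' V "Suc m"] nv vertical_new_crossing
      by (auto intro: adj_imp_conn_rev)
  show ?thesis using 1 2 3 4 jm conn_trans by blast
qed

lemma conn_closing_path: assumes "1 \<le> j" "j \<le> m" shows "((L,j),(0,j)) \<in> conn w' (Suc m) V"
proof -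
  have "((Suc L,j),(0,j)) \<in> adj w' (Suc m) V" using adj_closing_arc[of j "Suc m" w' V] assms by simp
  thus ?thesis using conn_across_new_crossing[OF assms] adj_imp_conn conn_trans by blast
qed

lemma adj_stab_collapse: assumes "(x,y) \<in> adj w' (Suc m) V"
  shows "proj x = proj y \<or> (proj x, proj y) \<in> adj w m v"
  using adj_cases[OF assms]
proof (elim disjE exE conjE)
  fix k j assume "x = (k,j)" "y = (Suc k, j)" "k < length w'" "1 \<le> j" "j \<le> Suc m"
    "j \<noteq> bidx (w'!k)" "j \<noteq> Suc (bidx (w'!k))"
  then show ?thesis
    by (cases "k < L") (auto simp: collapse_def nth_append less_Suc_eq intro!: adj_vertical_arc)
next
  fix k j assume "x = (k,j)" "y = (Suc k, j)" "k < length w'" "vertical w' V k"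
    "j \<in> {bidx (w'!k), Suc (bidx (w'!k))}"
  then show ?thesis using bidx_bounds[of k] vertical_stab_word[of k] vertical_new_crossing
    by (cases "k < L") (auto simp: collapse_def nth_append less_Suc_eq intro!: adj_vertical_arc)
next
  fix k assume "x = (k, bidx (w'!k))" "y = (k, Suc (bidx (w'!k)))" "k < length w'" "\<not> vertical w' V k"
  then show ?thesis using bidx_bounds[of k] vertical_stab_word[of k] vertical_new_crossing
    by (cases "k < L") (auto simp: collapse_def nth_append less_Suc_eq intro!: adj_lower_cap)
next
  fix k assume "x = (Suc k, bidx (w'!k))" "y = (Suc k, Suc (bidx (w'!k)))" "k < length w'" "\<not> vertical w' V k"
  then show ?thesis using bidx_bounds[of k] vertical_stab_word[of k] vertical_new_crossing
    by (cases "k < L") (auto simp: collapse_def nth_append less_Suc_eq intro!: adj_upper_cap)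
next
  fix j assume "x = (length w', j)" "y = (0,j)" "1 \<le> j" "j \<le> Suc m"
  then show ?thesis by (auto simp: collapse_def intro!: adj_closing_arc)
qed

lemma adj_imp_conn_stab: assumes "(a,b) \<in> adj w m v" shows "(a,b) \<in> conn w' (Suc m) V"
  using adj_cases[OF assms]
proof (elim disjE exE conjE)
  fix k j assume h: "a = (k,j)" "b = (Suc k, j)" "k < L" "1 \<le> j" "j \<le> m"
    "j \<noteq> bidx (w!k)" "j \<noteq> Suc (bidx (w!k))"
  have "((k,j),(Suc k,j)) \<in> adj w' (Suc m) V" using h
    by (intro adj_vertical_arc) (auto simp: nth_append)
  thus ?thesis using h by (auto intro: adj_imp_conn)
next
  fix k j assume h: "a = (k,j)" "b = (Suc k, j)" "k < L" "vertical w v k"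
    "j \<in> {bidx (w!k), Suc (bidx (w!k))}"
  have "((k,j),(Suc k,j)) \<in> adj w' (Suc m) V"
    using h bidx_bounds[OF h(3)] vertical_stab_word[OF h(3)]
    by (intro adj_vertical_arc) (auto simp: stab_word_nth[OF h(3)])
  thus ?thesis using h by (auto intro: adj_imp_conn)
next
  fix k assume h: "a = (k, bidx (w!k))" "b = (k, Suc (bidx (w!k)))" "k < L" "\<not> vertical w v k"
  have "((k,bidx (w'!k)),(k,Suc (bidx (w'!k)))) \<in> adj w' (Suc m) V"
    using h vertical_stab_word[OF h(3)]
    by (intro adj_lower_cap) auto
  thus ?thesis using h by (auto simp: stab_word_nth[OF h(3)] intro: adj_imp_conn)
next
  fix k assume h: "a = (Suc k, bidx (w!k))" "b = (Suc k, Suc (bidx (w!k)))" "k < L" "\<not> vertical w v k"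
  have "((Suc k,bidx (w'!k)),(Suc k,Suc (bidx (w'!k)))) \<in> adj w' (Suc m) V"
    using h vertical_stab_word[OF h(3)]
    by (intro adj_upper_cap) auto
  thus ?thesis using h by (auto simp: stab_word_nth[OF h(3)] intro: adj_imp_conn)
next
  fix j assume h: "a = (L, j)" "b = (0,j)" "1 \<le> j" "j \<le> m"
  thus ?thesis using conn_closing_path by simp
qed

lemma conn_imp_conn_stab: "(a,b) \<in> conn w m v \<Longrightarrow> (a,b) \<in> conn w' (Suc m) V"
  using conn_map[where f=id] adj_imp_conn_stab by (metis id_apply)

lemma conn_collapse: assumes "p \<in> pts w' (Suc m)" shows "(p, proj p) \<in> conn w' (Suc m) V"
proof -
  obtain k j where p: "p = (k,j)" "k \<le> Suc L" "1 \<le> j" "j \<le> Suc m" using assms unfolding pts_def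
    by auto
  show ?thesis
  proof (cases "j = Suc m")
    case True
    have a: "((k,Suc m),(0,Suc m)) \<in> conn w' (Suc m) V"
    proof (cases "k = Suc L")
      case True thus ?thesis using adj_closing_arc[of "Suc m" "Suc m" w' V]
        by (auto intro: adj_imp_conn)
    next
      case False thus ?thesis using conn_top_column[of 0 k] p conn_sym by auto
    qed
    show ?thesis
    proof (cases c_res1)
      case True thus ?thesis using a p \<open>j = Suc m\<close> by (simp add: collapse_def)
    next
      case False
      have "((0,Suc m),(L,Suc m)) \<in> conn w' (Suc m) V" using conn_top_column[of 0 L] by simp
      moreover have "((L,Suc m),(L,m)) \<in> conn w' (Suc m) V"
        using adj_lower_cap[of L w' V "Suc m"] False vertical_new_crossing
          by (auto intro: adj_imp_conn_rev)
      ultimately have "((k,Suc m),(L,m)) \<in> conn w' (Suc m) V" using a conn_trans by blast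
      thus ?thesis using p \<open>j = Suc m\<close> False by (simp add: collapse_def)
    qed
  next
    case False
    show ?thesis
    proof (cases "k = Suc L")
      case True thus ?thesis using conn_across_new_crossing[of j] p False conn_sym
        by (simp add: collapse_def)
    next
      case False': False
      thus ?thesis using p False by (simp add: collapse_def conn_refl min_absorb1)
    qed
  qed
qed

lemma conn_stab_iff: assumes "p \<in> pts w' (Suc m)" "q \<in> pts w' (Suc m)"
  shows "(p,q) \<in> conn w' (Suc m) V \<longleftrightarrow> (proj p, proj q) \<in> conn w m v"
proof
  assume "(p,q) \<in> conn w' (Suc m) V"
  thus "(proj p, proj q) \<in> conn w m v"
    by (rule conn_map) (use adj_stab_collapse conn_refl adj_imp_conn in metis)
next
  assume "(proj p, proj q) \<in> conn w m v"
  hence "(proj p, proj q) \<in> conn w' (Suc m) V" by (rule conn_imp_conn_stab)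
  thus "(p,q) \<in> conn w' (Suc m) V"
    using conn_collapse[OF assms(1)] conn_collapse[OF assms(2)] conn_sym conn_trans by blast
qed

lemma pts_subset_stab: "pts w m \<subseteq> pts w' (Suc m)"
  unfolding pts_def by auto

lemma collapse_id: "a \<in> pts w m \<Longrightarrow> proj a = a"
  unfolding pts_def collapse_def by auto

lemma collapse_in_pts: "q \<in> pts w' (Suc m) \<Longrightarrow> snd q \<le> m \<or> \<not> c_res1 \<Longrightarrow> proj q \<in> pts w m"
  using m1 unfolding pts_def collapse_def by (auto simp: min_def)

lemma collapse_top:
  "q \<in> pts w' (Suc m) \<Longrightarrow> snd q = Suc m \<Longrightarrow> c_res1 \<Longrightarrow> proj q = (0, Suc m) \<and> proj q \<notin> pts w m"
  unfolding pts_def collapse_def by auto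

lemma collapse_preimage_lift: "C \<subseteq> pts w m \<Longrightarrow> c_res1 \<Longrightarrow> {q \<in> pts w' (Suc m). proj q \<in> C} = lift w C"
  unfolding pts_def collapse_def lift_def by (auto simp: min_def split: if_splits)

lemma collapse_preimage_lift0:
  "C \<subseteq> pts w m \<Longrightarrow> \<not> c_res1 \<Longrightarrow> {q \<in> pts w' (Suc m). proj q \<in> C} = lift0 w m C"
  unfolding pts_def collapse_def lift_def lift0_def U0_def by (auto simp: min_def split: if_splits)

lemma circle_through_stab: assumes "p \<in> pts w' (Suc m)" "proj p \<in> pts w m"
  shows "circle_through w' (Suc m) V p = {q \<in> pts w' (Suc m). proj q \<in> circle_through w m v (proj p)}"
proof (rule set_eqI)
  fix q
  show "q \<in> circle_through w' (Suc m) V p \<longleftrightarrow> q \<in> {q \<in> pts w' (Suc m). proj q \<in> circle_through w m v (proj p)}"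
  proof (cases "q \<in> pts w' (Suc m)")
    case True
    have "(p,q) \<in> conn w' (Suc m) V \<longleftrightarrow> (proj p, proj q) \<in> conn w m v"
      using conn_stab_iff assms(1) True by blast
    moreover have "(proj p, proj q) \<in> conn w m v \<Longrightarrow> proj q \<in> pts w m"
      using conn_in_pts[OF bw _ assms(2)] .
    ultimately show ?thesis using True unfolding circle_through_def by auto
  next
    case False thus ?thesis unfolding circle_through_def by auto
  qed
qed

lemma circle_through_stab_top: assumes "p \<in> pts w' (Suc m)" "snd p = Suc m" "c_res1"
  shows "circle_through w' (Suc m) V p = U0 w m"
proof -
  have "circle_through w' (Suc m) V p = {q \<in> pts w' (Suc m). proj q = proj p}"
  proof (rule set_eqI)
    fix q
    show "q \<in> circle_through w' (Suc m) V p \<longleftrightarrow> q \<in> {q \<in> pts w' (Suc m). proj q = proj p}"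
    proof (cases "q \<in> pts w' (Suc m)")
      case True
      have "(p,q) \<in> conn w' (Suc m) V \<longleftrightarrow> (proj p, proj q) \<in> conn w m v"
        using conn_stab_iff assms(1) True by blast
      moreover have "(proj p, proj q) \<in> conn w m v \<Longrightarrow> proj q = proj p"
        using conn_outside_pts[OF bw _] collapse_top[OF assms] by blast
      ultimately show ?thesis using True conn_refl[of "proj p" w m v] unfolding circle_through_def
        by auto
    next
      case False thus ?thesis unfolding circle_through_def by auto
    qed
  qed
  also have "\<dots> = U0 w m"
    using assms collapse_in_pts unfolding U0_def pts_def collapse_def by (auto split: if_splits)
  finally show ?thesis .
qed

lemma circles_stab_preimage:
  "circles w' (Suc m) V
     = (\<lambda>C. {q \<in> pts w' (Suc m). proj q \<in> C}) ` circles w m v \<union> (if c_res1 then {U0 w m} else {})"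
    (is "_ = ?pre ` _ \<union> ?new")
proof -
  have "circle_through w' (Suc m) V ` pts w' (Suc m) = ?pre ` circle_through w m v ` pts w m \<union> ?new"
  proof (intro equalityI subsetI)
    fix C assume "C \<in> circle_through w' (Suc m) V ` pts w' (Suc m)"
    then obtain p where p: "p \<in> pts w' (Suc m)" "C = circle_through w' (Suc m) V p" by auto
    show "C \<in> ?pre ` circle_through w m v ` pts w m \<union> ?new"
    proof (cases "c_res1 \<and> snd p = Suc m")
      case True
      thus ?thesis using circle_through_stab_top p by auto
    next
      case False
      hence "snd p \<le> m \<or> \<not> c_res1" using p(1) unfolding pts_def by auto
      hence "proj p \<in> pts w m" using collapse_in_pts p(1) by blast
      thus ?thesis using circle_through_stab p by auto
    qed
  next
    fix C assume C: "C \<in> ?pre ` circle_through w m v ` pts w m \<union> ?new"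
    have top: "(0, Suc m) \<in> pts w' (Suc m)" unfolding pts_def by auto
    from C consider "c_res1" "C = U0 w m" | a where "a \<in> pts w m" "C = ?pre (circle_through w m v a)"
      by (auto split: if_splits)
    thus "C \<in> circle_through w' (Suc m) V ` pts w' (Suc m)"
    proof cases
      case 1
      thus ?thesis using circle_through_stab_top[OF top] top by force
    next
      case (2 a)
      hence "C = circle_through w' (Suc m) V a"
        using circle_through_stab[of a] pts_subset_stab collapse_id by auto
      thus ?thesis using 2 pts_subset_stab by blast
    qed
  qed
  thus ?thesis by (simp add: circles_eq_circle_through image_image)
qed

lemma circles_stab_one:
  assumes "c_res1" shows "circles w' (Suc m) V = insert (U0 w m) (lift w ` circles w m v)"
  unfolding circles_stab_preimage
  using assms collapse_preimage_lift[OF circle_subset_pts] by (auto intro!: image_cong)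

lemma circles_stab_zero:
  assumes "\<not> c_res1" shows "circles w' (Suc m) V = lift0 w m ` circles w m v"
  unfolding circles_stab_preimage
  using assms collapse_preimage_lift0[OF circle_subset_pts] by (auto intro!: image_cong)

end

lemma circles_stab_word_insert_new: assumes "braid_word m w" "1 \<le> m" "length w \<notin> v"
  shows "circles (stab_word w m) (Suc m) (insert (length w) v) = insert (U0 w m) (lift w ` circles w m v)"
proof -
  interpret stab_vertex w m v "insert (length w) v" using assms by unfold_locales auto
  show ?thesis using circles_stab_one by simp
qed

lemma circles_stab_word: assumes "braid_word m w" "1 \<le> m" "length w \<notin> v"
  shows "circles (stab_word w m) (Suc m) v = lift0 w m ` circles w m v"
proof -
  interpret stab_vertex w m v v using assms by unfold_locales auto
  show ?thesis using circles_stab_zero assms by simp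
qed

lemma lift_restrict: "C \<subseteq> pts w m \<Longrightarrow> {p \<in> lift w C. fst p \<le> length w} = C"
  unfolding lift_def pts_def by auto

lemma lift_inj: "C \<subseteq> pts w m \<Longrightarrow> D \<subseteq> pts w m \<Longrightarrow> lift w C = lift w D \<Longrightarrow> C = D"
proof -
  assume a: "C \<subseteq> pts w m" "D \<subseteq> pts w m" "lift w C = lift w D"
  have "C = {p \<in> lift w C. fst p \<le> length w}" using lift_restrict[OF a(1)] by simp
  also have "\<dots> = {p \<in> lift w D. fst p \<le> length w}" using a(3) by simp
  also have "\<dots> = D" using lift_restrict[OF a(2)] by simp
  finally show ?thesis .
qed

lemma lift0_restrict: "C \<subseteq> pts w m \<Longrightarrow> {p \<in> lift0 w m C. fst p \<le> length w \<and> snd p \<le> m} = C"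
  unfolding lift0_def lift_def pts_def U0_def by auto

lemma lift0_inj: "C \<subseteq> pts w m \<Longrightarrow> D \<subseteq> pts w m \<Longrightarrow> lift0 w m C = lift0 w m D \<Longrightarrow> C = D"
proof -
  assume a: "C \<subseteq> pts w m" "D \<subseteq> pts w m" "lift0 w m C = lift0 w m D"
  have "C = {p \<in> lift0 w m C. fst p \<le> length w \<and> snd p \<le> m}" using lift0_restrict[OF a(1)] by simp
  also have "\<dots> = {p \<in> lift0 w m D. fst p \<le> length w \<and> snd p \<le> m}" using a(3) by simp
  also have "\<dots> = D" using lift0_restrict[OF a(2)] by simp
  finally show ?thesis .
qed

lemma top_point_in_U0: "(0, Suc m) \<in> U0 w m"
  unfolding U0_def by auto

lemma top_point_notin_lift: "C \<subseteq> pts w m \<Longrightarrow> (0, Suc m) \<notin> lift w C"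
  unfolding lift_def pts_def by auto

lemma lift_ne_U0: "C \<subseteq> pts w m \<Longrightarrow> lift w C \<noteq> U0 w m"
proof
  assume "C \<subseteq> pts w m" "lift w C = U0 w m"
  thus False using top_point_in_U0[of m w] top_point_notin_lift[of C w m] by simp
qed

lemma lift0_ne_U0: assumes "C \<subseteq> pts w m" "C \<noteq> {}" shows "lift0 w m C \<noteq> U0 w m"
proof
  assume a: "lift0 w m C = U0 w m"
  obtain p where p: "p \<in> C" using assms(2) by auto
  hence "p \<in> lift0 w m C" unfolding lift0_def lift_def by simp
  hence "p \<in> U0 w m" using a by simp
  hence "snd p = Suc m" unfolding U0_def by (cases p) simp
  moreover have "snd p \<le> m" using p assms(1) unfolding pts_def by (cases p) auto
  ultimately show False by simp
qed

lemma lift0_eq_lift: "(length w, m) \<notin> C \<Longrightarrow> lift0 w m C = lift w C"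
  unfolding lift0_def by simp

lemma lift0_ne_lift: assumes "(length w, m) \<in> C" "D \<subseteq> pts w m" shows "lift0 w m C \<noteq> lift w D"
proof
  assume a: "lift0 w m C = lift w D"
  have "(0, Suc m) \<in> lift0 w m C" using assms(1) top_point_in_U0[of m w] unfolding lift0_def by simp
  thus False using a top_point_notin_lift[OF assms(2)] by simp
qed

lemma inj_on_lift: "inj_on (lift w) (Pow (pts w m))"
  by (rule inj_onI) (use lift_inj in blast)

lemma inj_on_lift0: "inj_on (lift0 w m) (Pow (pts w m))"
  by (rule inj_onI) (use lift0_inj in blast)

lemma U0_notin_lift_image: "P \<subseteq> circles w m v \<Longrightarrow> U0 w m \<notin> lift w ` P"
  using lift_ne_U0[OF circle_subset_pts] by blast

lemma khdiff_not_gens: "g \<notin> gens w m \<Longrightarrow> khdiff w m d g = 0"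
  unfolding khdiff_def dcoef_def by simp

lemma in_F_zero: "in_F w m j i (\<lambda>_. 0)"
  unfolding in_F_def by simp

lemma is_local_zero: "is_local w m b S Q (\<lambda>_. 0)"
  unfolding is_local_def by (intro conjI exI[of _ "\<lambda>_ _. 0"]) simp_all

lemma khdiff_zero: "khdiff w m (\<lambda>_. 0) = (\<lambda>_. 0)"
  unfolding khdiff_def by simp

section \<open>Edge coefficients\<close>

definition edge_coef_on :: "(nat\<times>nat) set set \<Rightarrow> (nat\<times>nat) set set \<Rightarrow> (nat\<times>nat) set set \<Rightarrow> (nat\<times>nat) set set \<Rightarrow> int" where
  "edge_coef_on A B P P' =
    (let Old = A - B; N = B - A in
     if P \<inter> (A \<inter> B) \<noteq> P' \<inter> (A \<inter> B) then 0
     else if card Old = 2 \<and> card N = 1 then (if (N \<subseteq> P') = (Old \<subseteq> P) then 1 else 0)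
     else if card Old = 1 \<and> card N = 2 then
       (if Old \<subseteq> P then
          (if card (N \<inter> P') = 1 then 1 else if card (N \<inter> P') = 2 then -1 else 0)
        else (if N \<inter> P' = {} then 1 else 0))
     else 0)"

lemma edge_coef_eq_on:
  "edge_coef w m g g' = edge_coef_on (circles w m (fst g)) (circles w m (fst g')) (snd g) (snd g')"
  unfolding edge_coef_def edge_coef_on_def Let_def by (rule refl)

lemma edge_coef_on_split: assumes "X \<notin> R" "Y \<notin> R" "Z \<notin> R" "X \<noteq> Y" "X \<noteq> Z" "Y \<noteq> Z"
  shows "edge_coef_on (insert X R) (insert Y (insert Z R)) P P' =
    (if P \<inter> R \<noteq> P' \<inter> R then 0 else if X \<in> P then
       (if card ({Y,Z} \<inter> P') = 1 then 1 else if card ({Y,Z} \<inter> P') = 2 then -1 else 0)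
     else (if {Y,Z} \<inter> P' = {} then 1 else 0))"
proof -
  have 1: "insert X R \<inter> insert Y (insert Z R) = R" using assms by auto
  have 2: "insert X R - insert Y (insert Z R) = {X}" using assms by auto
  have 3: "insert Y (insert Z R) - insert X R = {Y,Z}" using assms by auto
  have 4: "card {Y,Z} = 2" using assms by simp
  show ?thesis unfolding edge_coef_on_def Let_def 1 2 3 using 4 by simp
qed

text \<open>The split \<Delta>(x_+) = x_+ \<otimes> x_- + x_- \<otimes> x_+ - x_+ \<otimes> x_+, \<Delta>(x_-) = x_- \<otimes> x_- of the circle X
  into Y and Z, with the remaining circles relabelled by an injection f.\<close>

lemma edge_coef_on_split_labels:
  assumes inj: "inj_on f R"
    and new: "X \<notin> f ` R" "Y \<notin> f ` R" "Z \<notin> f ` R" "X \<noteq> Y" "X \<noteq> Z" "Y \<noteq> Z"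
    and Q: "Q1 \<subseteq> R" "Q \<subseteq> R"
  shows "edge_coef_on (insert X (f ` R)) (insert Y (insert Z (f ` R)))
      (f ` Q1 \<union> (if x then {X} else {})) (f ` Q \<union> (if y then {Y} else {}) \<union> (if z then {Z} else {}))
    = (if Q1 \<noteq> Q then 0 else if x then (if y \<noteq> z then 1 else if y then -1 else 0)
       else if y \<or> z then 0 else 1)"
proof -
  have restrict: "(f ` Q1 \<union> (if x then {X} else {})) \<inter> f ` R = f ` Q1"
      "(f ` Q \<union> (if y then {Y} else {}) \<union> (if z then {Z} else {})) \<inter> f ` R = f ` Q"
    using new Q by auto
  have old: "X \<in> f ` Q1 \<union> (if x then {X} else {}) \<longleftrightarrow> x"
    using new Q by auto
  have split: "{Y, Z} \<inter> (f ` Q \<union> (if y then {Y} else {}) \<union> (if z then {Z} else {}))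
       = (if y then {Y} else {}) \<union> (if z then {Z} else {})"
    using new Q by auto
  have "f ` Q1 = f ` Q \<longleftrightarrow> Q1 = Q" using inj_on_image_eq_iff[OF inj Q] .
  thus ?thesis
    unfolding edge_coef_on_split[OF new] restrict old split using new(6)
      by (cases y; cases z) simp_all
qed

lemma edge_coef_on_drop: assumes "X \<notin> B" "Y \<in> A - B" "Y \<notin> Q"
  shows "edge_coef_on A B Q Q' = edge_coef_on A B (Q - {X}) Q'"
proof -
  have h1: "Q \<inter> (A \<inter> B) = (Q - {X}) \<inter> (A \<inter> B)" using assms(1) by auto
  have h2: "\<not> (A - B \<subseteq> Q)" "\<not> (A - B \<subseteq> Q - {X})" using assms(2,3) by auto
  show ?thesis unfolding edge_coef_on_def Let_def h1 using h2 by simp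
qed

lemma alternating_sum_edge_coef_on: assumes "finite T" "X \<in> T" "X \<notin> B" "Y \<in> A - B" "Y \<notin> T"
  shows "(\<Sum>Q\<in>Pow T. (-1::int)^card Q * edge_coef_on A B Q Q') = 0"
proof -
  define T0 where "T0 = T - {X}"
  have T: "T = insert X T0" "X \<notin> T0" "finite T0" using assms unfolding T0_def by auto
  have disj: "Pow T0 \<inter> insert X ` Pow T0 = {}" using T(2) by auto
  have inj: "inj_on (insert X) (Pow T0)" using T(2) by (auto intro!: inj_onI)
  have "(\<Sum>Q\<in>Pow T. (-1::int)^card Q * edge_coef_on A B Q Q') =
      (\<Sum>Q\<in>Pow T0. (-1::int)^card Q * edge_coef_on A B Q Q') + (\<Sum>Q\<in>insert X ` Pow T0. (-1::int)^card Q * edge_coef_on A B Q Q')"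
    unfolding T(1) Pow_insert using T(3) disj by (intro sum.union_disjoint) auto
  also have "(\<Sum>Q\<in>insert X ` Pow T0. (-1::int)^card Q * edge_coef_on A B Q Q') = (\<Sum>Q\<in>Pow T0. (-1::int)^card (insert X Q) * edge_coef_on A B (insert X Q) Q')"
    using sum.reindex[OF inj] by simp
  also have "\<dots> = (\<Sum>Q\<in>Pow T0. - ((-1::int)^card Q * edge_coef_on A B Q Q'))"
  proof (rule sum.cong)
    fix Q assume Q: "Q \<in> Pow T0"
    have fQ: "finite Q" "X \<notin> Q" using Q T finite_subset by auto
    have YQ: "Y \<notin> insert X Q" using Q assms T unfolding T0_def by auto
    have "edge_coef_on A B (insert X Q) Q' = edge_coef_on A B (insert X Q - {X}) Q'"
      by (rule edge_coef_on_drop[OF assms(3,4) YQ])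
    also have "insert X Q - {X} = Q" using fQ by auto
    finally show "(-1::int)^card (insert X Q) * edge_coef_on A B (insert X Q) Q' = - ((-1::int)^card Q * edge_coef_on A B Q Q')"
      using fQ by simp
  qed simp
  finally show ?thesis by (simp add: sum_negf)
qed

section \<open>Negative stabilization\<close>

text \<open>Egen, Fgen and Dgen embed the generators of C(K) as those of E, F and D; the circles of K_v
  are transported along lift0 when c is 0-resolved and along lift when c is 1-resolved. The sign
  in cancel_inv is the cube sign of the edge to the last crossing c.\<close>

definition Egen :: "bgen list \<Rightarrow> nat \<Rightarrow> gen \<Rightarrow> gen" where
  "Egen w m g = (fst g, lift0 w m ` snd g)"

definition Fgen :: "bgen list \<Rightarrow> nat \<Rightarrow> gen \<Rightarrow> gen" where
  "Fgen w m g = (insert (length w) (fst g), lift w ` snd g)"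

definition Einv :: "bgen list \<Rightarrow> nat \<Rightarrow> gen \<Rightarrow> gen" where
  "Einv w m g = (fst g, {C \<in> circles w m (fst g). lift0 w m C \<in> snd g})"

definition stab_circle :: "bgen list \<Rightarrow> nat \<Rightarrow> nat set \<Rightarrow> (nat \<times> nat) set" where
  "stab_circle w m v = circle_through w m v (length w, m)"

definition cancel_inv :: "bgen list \<Rightarrow> nat \<Rightarrow> chain \<Rightarrow> chain" where
  "cancel_inv w m z = (\<lambda>g. if g \<in> gens (stab_word w m) (Suc m) \<and> length w \<notin> fst g
      then (-1) ^ card (fst g) * z (Fgen w m (Einv w m g)) else 0)"

definition stab_sign :: "nat \<Rightarrow> bool \<Rightarrow> int" where
  "stab_sign m b = (if even m = b then 1 else -1)"

definition theta_circles :: "bgen list \<Rightarrow> nat \<Rightarrow> bool \<Rightarrow> (nat \<times> nat) set set" where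
  "theta_circles w m b = lift0 w m ` bar_circ w m b"

text \<open>theta w m b \<sigma> is \<sigma> times the image of psi(K) under the identification of C(K) with the
  generators Egen lying over the oriented vertex of K.\<close>

definition theta :: "bgen list \<Rightarrow> nat \<Rightarrow> bool \<Rightarrow> int \<Rightarrow> chain" where
  "theta w m b \<sigma> = (\<lambda>g.
     if g \<in> gens (stab_word w m) (Suc m) \<and> fst g = vo w \<and> snd g \<subseteq> theta_circles w m b
     then \<sigma> * (-1)^card (snd g) else 0)"

locale neg_stab =
  fixes w :: "bgen list" and m :: nat
  assumes bw: "braid_word m w" and m1: "1 \<le> m"
begin

abbreviation "L \<equiv> length w"
abbreviation "w' \<equiv> stab_word w m"

lemma new_point_in_pts: "(L, m) \<in> pts w m"
  using m1 unfolding pts_def by auto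

lemma stab_circle_in_circles: "stab_circle w m v \<in> circles w m v"
  unfolding stab_circle_def circles_eq_circle_through using new_point_in_pts by simp

lemma new_point_in_circle_iff: assumes "C \<in> circles w m v" shows "(L,m) \<in> C \<longleftrightarrow> C = stab_circle w m v"
proof
  assume "(L,m) \<in> C" thus "C = stab_circle w m v" unfolding stab_circle_def
    using circle_eq_circle_through[OF assms] by simp
next
  assume "C = stab_circle w m v" thus "(L,m) \<in> C" unfolding stab_circle_def
    using circle_through_self[OF new_point_in_pts] by simp
qed

lemma gens_vertex: "(v,P) \<in> gens w m \<Longrightarrow> L \<notin> v \<and> v \<subseteq> {..<L}"
  unfolding gens_def by auto

lemma circles_resolved0: "(v,P) \<in> gens w m \<Longrightarrow> circles w' (Suc m) v = lift0 w m ` circles w m v"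
  using circles_stab_word[OF bw m1] gens_vertex by blast

lemma circles_resolved1:
  "(v,P) \<in> gens w m \<Longrightarrow> circles w' (Suc m) (insert L v) = insert (U0 w m) (lift w ` circles w m v)"
  using circles_stab_word_insert_new[OF bw m1] gens_vertex by blast

lemma Egen_gens: assumes "(v,P) \<in> gens w m" shows "Egen w m (v,P) \<in> gens w' (Suc m)"
proof -
  have "v \<subseteq> {..<L}" "P \<subseteq> circles w m v" using assms unfolding gens_def by auto
  thus ?thesis using circles_resolved0[OF assms] unfolding Egen_def gens_def by auto
qed

lemma Fgen_gens: assumes "(v,P) \<in> gens w m" shows "Fgen w m (v,P) \<in> gens w' (Suc m)"
proof -
  have "v \<subseteq> {..<L}" "P \<subseteq> circles w m v" using assms unfolding gens_def by auto
  thus ?thesis using circles_resolved1[OF assms] unfolding Fgen_def gens_def by auto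
qed

lemma Dgen_gens: assumes "(v,P) \<in> gens w m" shows "Dgen w m (v,P) \<in> gens w' (Suc m)"
proof -
  have "v \<subseteq> {..<L}" "P \<subseteq> circles w m v" using assms unfolding gens_def by auto
  thus ?thesis using circles_resolved1[OF assms] unfolding Dgen_def gens_def by auto
qed

lemma Egen_surj: assumes "g \<in> gens w' (Suc m)" "L \<notin> fst g" shows "\<exists>k \<in> gens w m. g = Egen w m k"
proof -
  obtain v P' where g: "g = (v,P')" "v \<subseteq> {..<Suc L}" "P' \<subseteq> circles w' (Suc m) v"
    using assms(1) unfolding gens_def by auto
  have v: "v \<subseteq> {..<L}" using g assms(2) by (auto simp: less_Suc_eq)
  have "P' \<subseteq> lift0 w m ` circles w m v"
    using g(3) circles_stab_word[OF bw m1] assms(2) g(1) by simp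
  hence "g = Egen w m (Einv w m g)" using g(1) unfolding Egen_def Einv_def by auto
  moreover have "Einv w m g \<in> gens w m" using v g(1) unfolding gens_def Einv_def by auto
  ultimately show ?thesis by blast
qed

lemma gens_resolved1_cases:
  assumes "g \<in> gens w' (Suc m)" "L \<in> fst g"
  shows "\<exists>k \<in> gens w m. g = (if U0 w m \<in> snd g then Dgen w m k else Fgen w m k)"
proof -
  obtain V P' where g: "g = (V,P')" "V \<subseteq> {..<Suc L}" "P' \<subseteq> circles w' (Suc m) V"
    using assms(1) unfolding gens_def by auto
  define v where "v = V - {L}"
  have v: "v \<subseteq> {..<L}" "V = insert L v" "L \<notin> v"
    using g assms(2) unfolding v_def by (auto simp: less_Suc_eq)
  have cc: "circles w' (Suc m) V = insert (U0 w m) (lift w ` circles w m v)"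
    using circles_stab_word_insert_new[OF bw m1 v(3)] v by simp
  define P where "P = {C \<in> circles w m v. lift w C \<in> P'}"
  have "P \<subseteq> circles w m v" unfolding P_def by auto
  hence "P' - {U0 w m} = lift w ` P"
    using g(3) cc U0_notin_lift_image[OF subset_refl, of w m v] unfolding P_def by auto
  hence "g = (if U0 w m \<in> snd g then Dgen w m (v,P) else Fgen w m (v,P))"
    using g v unfolding Dgen_def Fgen_def by auto
  moreover have "(v,P) \<in> gens w m" using v unfolding gens_def P_def by auto
  ultimately show ?thesis by blast
qed

lemma circles_subset_Pow: "circles w m v \<subseteq> Pow (pts w m)"
  using circle_subset_pts by blast

lemma inj_on_lift_circles: "inj_on (lift w) (circles w m v)"
  using inj_on_lift circles_subset_Pow by (rule inj_on_subset)

lemma inj_on_lift0_circles: "inj_on (lift0 w m) (circles w m v)"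
  using inj_on_lift0 circles_subset_Pow by (rule inj_on_subset)

lemma stab_circle_subset_pts: "stab_circle w m v \<subseteq> pts w m"
  using stab_circle_in_circles circle_subset_pts by blast

lemma new_point_in_stab_circle: "(L,m) \<in> stab_circle w m v"
  using new_point_in_circle_iff stab_circle_in_circles by blast

lemma lift0_eq_lift_circle: "C \<in> circles w m v \<Longrightarrow> C \<noteq> stab_circle w m v \<Longrightarrow> lift0 w m C = lift w C"
  using new_point_in_circle_iff lift0_eq_lift by blast

lemma lift0_image_split:
  assumes "P1 \<subseteq> circles w m v"
  shows "lift0 w m ` P1 = lift w ` (P1 - {stab_circle w m v})
    \<union> (if stab_circle w m v \<in> P1 then {lift0 w m (stab_circle w m v)} else {})"
proof -
  have "lift0 w m ` (P1 - {stab_circle w m v}) = lift w ` (P1 - {stab_circle w m v})"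
    using assms lift0_eq_lift_circle by (intro image_cong) auto
  moreover have "lift0 w m ` P1 = lift0 w m ` (P1 - {stab_circle w m v})
      \<union> (if stab_circle w m v \<in> P1 then {lift0 w m (stab_circle w m v)} else {})"
    by auto
  ultimately show ?thesis by simp
qed

lemma lift0_image_circles:
  "lift0 w m ` circles w m v
    = insert (lift0 w m (stab_circle w m v)) (lift w ` (circles w m v - {stab_circle w m v}))"
  using lift0_image_split[OF subset_refl] stab_circle_in_circles by auto

lemma lift_image_circles:
  "insert (U0 w m) (lift w ` circles w m v)
    = insert (U0 w m) (insert (lift w (stab_circle w m v)) (lift w ` (circles w m v - {stab_circle w m v})))"
  using stab_circle_in_circles by blast

lemma stab_circles_distinct:
  "lift0 w m (stab_circle w m v) \<notin> lift w ` (circles w m v - {stab_circle w m v})"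
  "U0 w m \<notin> lift w ` (circles w m v - {stab_circle w m v})"
  "lift w (stab_circle w m v) \<notin> lift w ` (circles w m v - {stab_circle w m v})"
  "lift0 w m (stab_circle w m v) \<noteq> U0 w m"
  "lift0 w m (stab_circle w m v) \<noteq> lift w (stab_circle w m v)"
  "U0 w m \<noteq> lift w (stab_circle w m v)"
proof -
  let ?c = "stab_circle w m v"
  show "lift0 w m ?c \<notin> lift w ` (circles w m v - {?c})"
    using lift0_ne_lift[OF new_point_in_stab_circle circle_subset_pts] by blast
  show "U0 w m \<notin> lift w ` (circles w m v - {?c})"
    using U0_notin_lift_image[of "circles w m v - {?c}"] by blast
  show "lift w ?c \<notin> lift w ` (circles w m v - {?c})"
    using inj_on_image_mem_iff[OF inj_on_lift_circles stab_circle_in_circles, of "circles w m v - {?c}"]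
    by blast
  show "lift0 w m ?c \<noteq> U0 w m"
    using lift0_ne_U0[OF stab_circle_subset_pts] new_point_in_stab_circle by blast
  show "lift0 w m ?c \<noteq> lift w ?c"
    using lift0_ne_lift[OF new_point_in_stab_circle stab_circle_subset_pts] .
  show "U0 w m \<noteq> lift w ?c"
    using lift_ne_U0[OF stab_circle_subset_pts] by metis
qed

lemma edge_coef_on_stab:
  assumes "P1 \<subseteq> circles w m v" "P \<subseteq> circles w m v"
  shows "edge_coef_on (lift0 w m ` circles w m v) (insert (U0 w m) (lift w ` circles w m v))
      (lift0 w m ` P1) ((if y then {U0 w m} else {}) \<union> lift w ` P)
    = (let c = stab_circle w m v in
       if P1 - {c} \<noteq> P - {c} then 0 else if c \<in> P1 then (if y \<noteq> (c \<in> P) then 1 else if y then -1 else 0)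
       else if y \<or> c \<in> P then 0 else 1)"
proof -
  let ?c = "stab_circle w m v"
  let ?R = "circles w m v - {?c}"
  have inj: "inj_on (lift w) ?R" using inj_on_lift_circles by (rule inj_on_subset) blast
  have labels: "(if y then {U0 w m} else {}) \<union> lift w ` P
      = lift w ` (P - {?c}) \<union> (if y then {U0 w m} else {}) \<union> (if ?c \<in> P then {lift w ?c} else {})"
    by auto
  have "P1 - {?c} \<subseteq> ?R" "P - {?c} \<subseteq> ?R" using assms by auto
  from edge_coef_on_split_labels[OF inj stab_circles_distinct this]
  show ?thesis
    unfolding lift0_image_circles lift_image_circles lift0_image_split[OF assms(1)] labels Let_def .
qed

lemma edge_coef_on_EF:
  assumes "P1 \<subseteq> circles w m v" "P \<subseteq> circles w m v"
  shows "edge_coef_on (lift0 w m ` circles w m v) (insert (U0 w m) (lift w ` circles w m v))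
      (lift0 w m ` P1) (lift w ` P) = (if P1 = P then 1 else 0)"
  using edge_coef_on_stab[OF assms, of False] by (auto simp: Let_def)

lemma edge_coef_on_ED:
  assumes "P1 \<subseteq> circles w m v" "P \<subseteq> circles w m v"
  shows "edge_coef_on (lift0 w m ` circles w m v) (insert (U0 w m) (lift w ` circles w m v))
      (lift0 w m ` P1) (insert (U0 w m) (lift w ` P))
    = (if P1 = insert (stab_circle w m v) P then (if stab_circle w m v \<in> P then -1 else 1) else 0)"
  using edge_coef_on_stab[OF assms, of True] by (auto simp: Let_def)

lemma Einv_Egen: assumes "(v,P) \<in> gens w m" shows "Einv w m (Egen w m (v,P)) = (v,P)"
proof -
  have P: "P \<subseteq> circles w m v" using assms unfolding gens_def by auto
  have "{C \<in> circles w m v. lift0 w m C \<in> lift0 w m ` P} = P"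
    using inj_on_image_mem_iff[OF inj_on_lift0_circles _ P] P by auto
  thus ?thesis unfolding Einv_def Egen_def by simp
qed

lemma Egen_inj: assumes "k1 \<in> gens w m" "k \<in> gens w m" "Egen w m k1 = Egen w m k" shows "k1 = k"
proof -
  obtain v1 P1 v P where "k1 = (v1,P1)" "k = (v,P)" by (cases k1, cases k)
  thus ?thesis using Einv_Egen assms by metis
qed

lemma fst_Egen: "fst (Egen w m (v,P)) = v"
  unfolding Egen_def by simp

lemma fst_Fgen: "fst (Fgen w m (v,P)) = insert L v"
  unfolding Fgen_def by simp

lemma fst_Dgen: "fst (Dgen w m (v,P)) = insert L v"
  unfolding Dgen_def by simp

lemma U0_notin_Fgen: assumes "(v,P) \<in> gens w m" shows "U0 w m \<notin> snd (Fgen w m (v,P))"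
  using assms U0_notin_lift_image[of P w m v] unfolding Fgen_def gens_def by auto

lemma dcoef_Egen_resolved1:
  assumes k1: "(v1,P1) \<in> gens w m" and g: "(insert L v, P') \<in> gens w' (Suc m)" and v: "v \<subseteq> {..<L}"
  shows "dcoef w' (Suc m) (Egen w m (v1,P1)) (insert L v, P')
    = (if v = v1 then (-1)^card v * edge_coef_on (lift0 w m ` circles w m v)
         (insert (U0 w m) (lift w ` circles w m v)) (lift0 w m ` P1) P' else 0)"
proof -
  have v1: "v1 \<subseteq> {..<L}" using k1 unfolding gens_def by auto
  hence below: "{c' \<in> v1. c' < L} = v1" by auto
  have "dcoef w' (Suc m) (Egen w m (v1,P1)) (insert L v, P') =
    (\<Sum>c\<in>{..<Suc L} - v1. if insert L v = insert c v1 then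
       (-1) ^ card {c' \<in> v1. c' < c} * edge_coef w' (Suc m) (Egen w m (v1,P1)) (insert L v, P') else 0)"
    unfolding dcoef_def fst_Egen using Egen_gens[OF k1] g by simp
  also have "\<dots> = (if v = v1 then (-1) ^ card v1 * edge_coef w' (Suc m) (Egen w m (v1,P1)) (insert L v, P') else 0)"
    using sum_insert_new_crossing[OF v1 v] below by simp
  finally show ?thesis
    unfolding edge_coef_eq_on Egen_def
    using circles_resolved0[OF k1] circles_stab_word_insert_new[OF bw m1, of v] v by auto
qed

lemma dcoef_Egen_Fgen:
  assumes "(v1,P1) \<in> gens w m" "(v,P) \<in> gens w m"
  shows "dcoef w' (Suc m) (Egen w m (v1,P1)) (Fgen w m (v,P)) = (if (v1,P1) = (v,P) then (-1)^card v else 0)"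
proof -
  have "dcoef w' (Suc m) (Egen w m (v1,P1)) (Fgen w m (v,P))
      = (if v = v1 then (-1)^card v * edge_coef_on (lift0 w m ` circles w m v)
         (insert (U0 w m) (lift w ` circles w m v)) (lift0 w m ` P1) (lift w ` P) else 0)"
    using dcoef_Egen_resolved1[OF assms(1)] Fgen_gens[OF assms(2)] assms(2)
    unfolding Fgen_def gens_def by simp
  thus ?thesis using edge_coef_on_EF[of P1 v P] assms unfolding gens_def
    by (cases "v = v1") simp_all
qed

lemma dcoef_Egen_Dgen:
  assumes "(v1,P1) \<in> gens w m" "(v,P) \<in> gens w m"
  shows "dcoef w' (Suc m) (Egen w m (v1,P1)) (Dgen w m (v,P)) =
     (if (v1,P1) = (v, insert (stab_circle w m v) P)
      then (-1)^card v * (if stab_circle w m v \<in> P then -1 else 1) else 0)"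
proof -
  have "dcoef w' (Suc m) (Egen w m (v1,P1)) (Dgen w m (v,P))
      = (if v = v1 then (-1)^card v * edge_coef_on (lift0 w m ` circles w m v)
         (insert (U0 w m) (lift w ` circles w m v)) (lift0 w m ` P1) (insert (U0 w m) (lift w ` P)) else 0)"
    using dcoef_Egen_resolved1[OF assms(1)] Dgen_gens[OF assms(2)] assms(2)
    unfolding Dgen_def gens_def by simp
  thus ?thesis using edge_coef_on_ED[of P1 v P] assms unfolding gens_def
    by (cases "v = v1") simp_all
qed

definition E_supported :: "chain \<Rightarrow> bool" where
  "E_supported d \<longleftrightarrow> (\<forall>g. d g \<noteq> 0 \<longrightarrow> g \<in> gens w' (Suc m) \<and> L \<notin> fst g)"

lemma khdiff_E_supported: assumes d: "E_supported d" and a: "a \<in> gens w' (Suc m)"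
  and dc: "\<And>k1. k1 \<in> gens w m \<Longrightarrow> dcoef w' (Suc m) (Egen w m k1) a = (if k1 = k then c else 0)"
  and k: "k \<in> gens w m"
  shows "khdiff w' (Suc m) d a = d (Egen w m k) * c"
proof -
  have "khdiff w' (Suc m) d a = (\<Sum>g\<in>gens w' (Suc m). if g = Egen w m k then d g * c else 0)"
    unfolding khdiff_def
  proof (rule sum.cong)
    fix g assume g: "g \<in> gens w' (Suc m)"
    show "d g * dcoef w' (Suc m) g a = (if g = Egen w m k then d g * c else 0)"
    proof (cases "d g = 0")
      case True thus ?thesis by auto
    next
      case False
      hence "L \<notin> fst g" using d unfolding E_supported_def by blast
      then obtain k1 where k1: "k1 \<in> gens w m" "g = Egen w m k1" using Egen_surj g by blast
      have "g = Egen w m k \<longleftrightarrow> k1 = k"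
      proof
        assume "g = Egen w m k" thus "k1 = k" using Egen_inj[OF k1(1) k] k1(2) by simp
      qed (use k1 in simp)
      thus ?thesis using dc[OF k1(1)] k1 by simp
    qed
  qed simp
  also have "\<dots> = d (Egen w m k) * c" using finite_gens Egen_gens k
    by (cases k) (simp add: sum.delta)
  finally show ?thesis .
qed

lemma khdiff_E_supported_Fgen:
  assumes "E_supported d" "(v,P) \<in> gens w m"
  shows "khdiff w' (Suc m) d (Fgen w m (v,P)) = (-1)^card v * d (Egen w m (v,P))"
proof -
  have "dcoef w' (Suc m) (Egen w m k1) (Fgen w m (v,P)) = (if k1 = (v,P) then (-1)^card v else 0)"
    if "k1 \<in> gens w m" for k1
    using dcoef_Egen_Fgen[of "fst k1" "snd k1" v P] that assms(2) by simp
  from khdiff_E_supported[OF assms(1) Fgen_gens[OF assms(2)] this assms(2)] show ?thesis by simp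
qed

lemma gens_insert_stab_circle:
  assumes "(v,P) \<in> gens w m"
  shows "(v, insert (stab_circle w m v) P) \<in> gens w m"
  using assms stab_circle_in_circles unfolding gens_def by auto

lemma khdiff_E_supported_Dgen:
  assumes "E_supported d" "(v,P) \<in> gens w m"
  shows "khdiff w' (Suc m) d (Dgen w m (v,P)) = (-1)^card v * (if stab_circle w m v \<in> P then -1 else 1)
    * d (Egen w m (v, insert (stab_circle w m v) P))"
proof -
  have "dcoef w' (Suc m) (Egen w m k1) (Dgen w m (v,P))
      = (if k1 = (v, insert (stab_circle w m v) P)
         then (-1)^card v * (if stab_circle w m v \<in> P then -1 else 1) else 0)"
    if "k1 \<in> gens w m" for k1
    using dcoef_Egen_Dgen[of "fst k1" "snd k1" v P] that assms(2) by simp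
  from khdiff_E_supported[OF assms(1) Dgen_gens[OF assms(2)] this gens_insert_stab_circle[OF assms(2)]]
  show ?thesis by simp
qed

lemma projF_Fgen: "k \<in> gens w m \<Longrightarrow> projF w m x (Fgen w m k) = x (Fgen w m k)"
  unfolding projF_def using Fgen_gens U0_notin_Fgen by (cases k) (auto simp: fst_Fgen)

lemma projD_Dgen: "k \<in> gens w m \<Longrightarrow> projD w m x (Dgen w m k) = x (Dgen w m k)"
  unfolding projD_def using Dgen_gens by (cases k) (auto simp: fst_Dgen Dgen_def)

lemma cancel_inv_E_supported: "E_supported (cancel_inv w m z)"
  unfolding E_supported_def cancel_inv_def by auto

lemma cancel_inv_Egen:
  "k \<in> gens w m \<Longrightarrow> cancel_inv w m z (Egen w m k) = (-1)^card (fst k) * z (Fgen w m k)"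
  unfolding cancel_inv_def using Egen_gens Einv_Egen gens_vertex by (cases k) (auto simp: fst_Egen)

lemma cancel_inv_projF: "cancel_inv w m (projF w m z) = cancel_inv w m z"
proof
  fix g
  show "cancel_inv w m (projF w m z) g = cancel_inv w m z g"
  proof (cases "g \<in> gens w' (Suc m) \<and> L \<notin> fst g")
    case True
    then obtain k where "k \<in> gens w m" "g = Egen w m k" using Egen_surj by blast
    thus ?thesis using cancel_inv_Egen projF_Fgen by simp
  qed (auto simp: cancel_inv_def)
qed

lemma cancel_inv_right_inverse:
  assumes "projF w m z = z" shows "projF w m (khdiff w' (Suc m) (cancel_inv w m z)) = z"
proof
  fix g
  show "projF w m (khdiff w' (Suc m) (cancel_inv w m z)) g = z g"
  proof (cases "g \<in> gens w' (Suc m) \<and> L \<in> fst g \<and> U0 w m \<notin> snd g")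
    case True
    then obtain v P where k: "(v,P) \<in> gens w m" "g = Fgen w m (v,P)"
      using gens_resolved1_cases by fastforce
    have "khdiff w' (Suc m) (cancel_inv w m z) g = z g"
      using khdiff_E_supported_Fgen[OF cancel_inv_E_supported k(1)] cancel_inv_Egen[OF k(1)] k(2)
      by simp
    thus ?thesis using True unfolding projF_def by simp
  next
    case False
    thus ?thesis using fun_cong[OF assms, of g] unfolding projF_def by auto
  qed
qed

lemma cancel_inv_unique:
  assumes supp: "\<And>z. E_supported (h z)"
    and inv: "\<And>z. projF w m z = z \<Longrightarrow> projF w m (khdiff w' (Suc m) (h z)) = z"
    and proj: "\<And>z. h z = h (projF w m z)"
  shows "h = cancel_inv w m"
proof (intro ext)
  fix z g
  let ?z' = "projF w m z"
  have hz: "h z = h ?z'" by (rule proj)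
  have "projF w m ?z' = ?z'" unfolding projF_def by auto
  hence hz': "projF w m (khdiff w' (Suc m) (h ?z')) = ?z'" by (rule inv)
  show "h z g = cancel_inv w m z g"
  proof (cases "g \<in> gens w' (Suc m) \<and> L \<notin> fst g")
    case True
    then obtain v P where k: "(v,P) \<in> gens w m" "g = Egen w m (v,P)" using Egen_surj by fastforce
    have "khdiff w' (Suc m) (h ?z') (Fgen w m (v,P)) = z (Fgen w m (v,P))"
      using fun_cong[OF hz', of "Fgen w m (v,P)"] projF_Fgen[OF k(1)] by simp
    hence "(-1)^card v * h ?z' g = z (Fgen w m (v,P))"
      using khdiff_E_supported_Fgen[OF supp k(1)] k(2) by simp
    hence "h ?z' g = (-1)^card v * z (Fgen w m (v,P))"
      by (metis left_minus_one_mult_self)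
    thus ?thesis using hz k cancel_inv_Egen[OF k(1)] by simp
  next
    case False
    hence "h ?z' g = 0" using supp[of ?z'] unfolding E_supported_def by blast
    thus ?thesis using False hz unfolding cancel_inv_def by auto
  qed
qed

lemma phi_inv_eq: "phi_inv w m = cancel_inv w m"
  unfolding phi_inv_def
proof (rule the_equality)
  show "(\<forall>z g. cancel_inv w m z g \<noteq> 0 \<longrightarrow> g \<in> gens w' (Suc m) \<and> L \<notin> fst g) \<and>
    (\<forall>z. projF w m z = z \<longrightarrow> projF w m (khdiff w' (Suc m) (cancel_inv w m z)) = z) \<and>
    (\<forall>z. cancel_inv w m z = cancel_inv w m (projF w m z))"
    using cancel_inv_E_supported cancel_inv_right_inverse cancel_inv_projF
    unfolding E_supported_def by metis
qed (rule cancel_inv_unique; simp add: E_supported_def)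

lemma stab_g_gen:
  assumes "(v,P) \<in> gens w m"
  shows "stab_g w m y (v,P) = y (Dgen w m (v,P))
    - (if stab_circle w m v \<in> P then -1 else 1) * y (Fgen w m (v, insert (stab_circle w m v) P))"
proof -
  let ?k = "(v, insert (stab_circle w m v) P)"
  let ?s = "if stab_circle w m v \<in> P then -1 else (1::int)"
  have k: "?k \<in> gens w m" by (rule gens_insert_stab_circle[OF assms])
  have "projD w m (khdiff w' (Suc m) (cancel_inv w m (projF w m y))) (Dgen w m (v,P))
      = (-1)^card v * ?s * cancel_inv w m (projF w m y) (Egen w m ?k)"
    using projD_Dgen[OF assms] khdiff_E_supported_Dgen[OF cancel_inv_E_supported assms] by simp
  also have "\<dots> = (-1)^card v * ?s * ((-1)^card v * y (Fgen w m ?k))"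
    using cancel_inv_Egen[OF k] projF_Fgen[OF k] by simp
  also have "\<dots> = ?s * y (Fgen w m ?k)"
    by (simp add: algebra_simps)
  finally show ?thesis
    unfolding stab_g_def iso_D_def phi_inv_eq using assms projD_Dgen[OF assms] by simp
qed

lemma stab_g_not_gens: "g \<notin> gens w m \<Longrightarrow> stab_g w m y g = 0"
  unfolding stab_g_def iso_D_def by simp

lemma new_crossing_notin_vo: "L \<notin> vo w"
  unfolding vo_def by simp

lemma stab_circle_vo: "stab_circle w m (vo w) = strand_circle w m"
  unfolding stab_circle_def using circle_through_vo[OF new_point_in_pts] by simp

lemma lift_image_subset_bar_circ_iff:
  assumes "P \<subseteq> circles w m (vo w)"
  shows "lift w ` P \<subseteq> bar_circ w' (Suc m) b \<longleftrightarrow> P \<subseteq> bar_circ w m b"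
proof -
  have "lift w ` P \<subseteq> bar_circ w' (Suc m) b \<longleftrightarrow> lift w ` P \<subseteq> lift w ` bar_circ w m b"
    unfolding bar_circ_stab_word using U0_notin_lift_image[OF assms] by auto
  also have "\<dots> \<longleftrightarrow> P \<subseteq> bar_circ w m b"
    using inj_on_image_subset_iff[OF inj_on_lift_circles assms bar_circ_subset_circles_vo] .
  finally show ?thesis .
qed

lemma U0_in_bar_circ_iff: "U0 w m \<in> bar_circ w' (Suc m) b \<longleftrightarrow> even (Suc m) = b"
  unfolding bar_circ_stab_word using U0_notin_lift_image[OF bar_circ_subset_circles_vo] by auto

lemma card_lift_image: "P \<subseteq> circles w m v \<Longrightarrow> card (lift w ` P) = card P"
  using card_image inj_on_subset[OF inj_on_lift_circles] by blast

lemma psi_stab_Fgen: assumes "(v,P) \<in> gens w m"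
  shows "psi w' (Suc m) b (Fgen w m (v,P)) = psi w m b (v,P)"
proof (cases "v = vo w")
  case True
  have P: "P \<subseteq> circles w m (vo w)" using assms True unfolding gens_def by auto
  show ?thesis unfolding psi_def Fgen_def
    using True lift_image_subset_bar_circ_iff[OF P] card_lift_image[OF P] vo_stab_word by simp
next
  case False
  have "insert L v \<noteq> insert L (vo w)" using False new_crossing_notin_vo gens_vertex[OF assms]
    by (metis insert_ident)
  thus ?thesis unfolding psi_def Fgen_def using False vo_stab_word by simp
qed

lemma psi_stab_Dgen: assumes "(v,P) \<in> gens w m"
  shows "psi w' (Suc m) b (Dgen w m (v,P)) = (if even (Suc m) = b then - psi w m b (v,P) else 0)"
proof (cases "v = vo w")
  case True
  have P: "P \<subseteq> circles w m (vo w)" using assms True unfolding gens_def by auto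
  have U: "U0 w m \<notin> lift w ` P" using U0_notin_lift_image[OF P] .
  have fin: "finite (lift w ` P)" using P finite_circles finite_subset by blast
  have c: "card (insert (U0 w m) (lift w ` P)) = Suc (card P)" using U fin card_lift_image[OF P]
    by simp
  show ?thesis unfolding psi_def Dgen_def
    using True lift_image_subset_bar_circ_iff[OF P] U0_in_bar_circ_iff c vo_stab_word by auto
next
  case False
  have "insert L v \<noteq> insert L (vo w)" using False new_crossing_notin_vo gens_vertex[OF assms]
    by (metis insert_ident)
  thus ?thesis unfolding psi_def Dgen_def using False vo_stab_word by simp
qed

lemma psi_vertex_sign: "(-1)^card v * psi w m b (v,P) = (-1)^card (vo w) * psi w m b (v,P)"
  unfolding psi_def by simp

lemma psi_insert_stab_circle:
  assumes "(v,P) \<in> gens w m"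
  shows "(if stab_circle w m v \<in> P then -1 else 1) * psi w m b (v, insert (stab_circle w m v) P)
     = (if even m = b then - psi w m b (v,P) else 0)"
proof (cases "v = vo w")
  case True
  have "finite P" using assms finite_circles finite_subset unfolding gens_def by blast
  moreover have "strand_circle w m \<in> bar_circ w m b \<longleftrightarrow> even m = b"
    using strand_circle_in_bar_circ_iff m1 by blast
  ultimately show ?thesis unfolding psi_def stab_circle_vo True by (auto simp: card_insert_if)
qed (simp add: psi_def)

lemma stab_g_psi: "stab_g w m (psi w' (Suc m) b) = (\<lambda>g. stab_sign m b * psi w m b g)"
proof
  fix g
  show "stab_g w m (psi w' (Suc m) b) g = stab_sign m b * psi w m b g"
  proof (cases "g \<in> gens w m")
    case True
    then obtain v P where g: "g = (v,P)" "(v,P) \<in> gens w m" by (cases g) auto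
    have "stab_g w m (psi w' (Suc m) b) (v,P) = (if even (Suc m) = b then - psi w m b (v,P) else 0)
      - (if stab_circle w m v \<in> P then -1 else 1) * psi w m b (v, insert (stab_circle w m v) P)"
      using stab_g_gen[OF g(2)] psi_stab_Dgen[OF g(2)] psi_stab_Fgen[OF gens_insert_stab_circle[OF g(2)]]
      by simp
    thus ?thesis using psi_insert_stab_circle[OF g(2)] g(1) by (simp add: stab_sign_def)
  next
    case False
    thus ?thesis using stab_g_not_gens[OF False] psi_in_gens[of w m b g] by auto
  qed
qed

lemma strand_circle_notin_circles:
  assumes c: "c < L" "bpos (w!c)" and j: "j \<in> {bidx (w!c), Suc (bidx (w!c))}"
  shows "strand_circle w j \<notin> circles w m (insert c (vo w))"
proof
  let ?v = "insert c (vo w)"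
  let ?i = "bidx (w!c)"
  assume S: "strand_circle w j \<in> circles w m ?v"
  have nv: "\<not> vertical w ?v c" unfolding vertical_def using c by simp
  have e: "((c,?i),(c,Suc ?i)) \<in> conn w m ?v" using adj_lower_cap[OF c(1) nv] adj_imp_conn by blast
  have ii: "1 \<le> ?i" "Suc ?i \<le> m" using braid_word_bidx[OF bw c(1)] by auto
  have p1: "(c,?i) \<in> pts w m" "(c, Suc ?i) \<in> pts w m" using ii c unfolding pts_def by auto
  have cj: "(c,j) \<in> strand_circle w j" using c unfolding strand_circle_def by auto
  have Sj: "strand_circle w j = circle_through w m ?v (c,j)"
    using circle_eq_circle_through[OF S cj] .
  show False
  proof (cases "j = ?i")
    case True
    hence "(c, Suc ?i) \<in> circle_through w m ?v (c,j)" using e p1 unfolding circle_through_def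
      by auto
    hence "(c, Suc ?i) \<in> strand_circle w j" using Sj by simp
    thus False using True unfolding strand_circle_def by auto
  next
    case False
    hence jj: "j = Suc ?i" using j by auto
    hence "(c, ?i) \<in> circle_through w m ?v (c,j)" using conn_sym[OF e] p1
      unfolding circle_through_def by auto
    hence "(c, ?i) \<in> strand_circle w j" using Sj by simp
    thus False using jj unfolding strand_circle_def by auto
  qed
qed

lemma circles_stab_vo: "circles w' (Suc m) (vo w) = lift0 w m ` circles w m (vo w)"
  using circles_stab_word[OF bw m1 new_crossing_notin_vo] .

lemma theta_circles_subset: "theta_circles w m b \<subseteq> circles w' (Suc m) (vo w)"
  unfolding circles_stab_vo theta_circles_def using bar_circ_subset_circles_vo[of w m b] by auto

lemma finite_theta_circles: "finite (theta_circles w m b)"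
  using theta_circles_subset finite_circles finite_subset by blast

lemma khdiff_theta_factor:
  assumes g': "g' \<in> gens w' (Suc m)"
  shows "khdiff w' (Suc m) (theta w m b \<sigma>) g'
    = \<sigma> * (\<Sum>c\<in>{..<Suc L} - vo w. if fst g' = insert c (vo w) then (-1)^card {c' \<in> vo w. c' < c} else 0)
        * (\<Sum>Q\<in>Pow (theta_circles w m b). (-1)^card Q
             * edge_coef_on (circles w' (Suc m) (vo w)) (circles w' (Suc m) (fst g')) Q (snd g'))"
    (is "_ = \<sigma> * ?S * (\<Sum>Q\<in>Pow ?T. (-1)^card Q * ?ec Q)")
proof -
  let ?\<theta> = "theta w m b \<sigma>"
  let ?emb = "\<lambda>Q. (vo w, Q)"
  have gQ: "(vo w, Q) \<in> gens w' (Suc m)" if "Q \<subseteq> ?T" for Q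
    using that theta_circles_subset[of b] vo_subset[of w] unfolding gens_def by auto
  have dc: "dcoef w' (Suc m) (vo w, Q) g' = ?S * ?ec Q" if Q: "Q \<subseteq> ?T" for Q
    unfolding dcoef_def edge_coef_eq_on fst_conv snd_conv sum_distrib_right
    using gQ[OF Q] g' by (auto intro: sum.cong)
  have "khdiff w' (Suc m) ?\<theta> g' = (\<Sum>g\<in>?emb ` Pow ?T. ?\<theta> g * dcoef w' (Suc m) g g')"
    unfolding khdiff_def
  proof (rule sum.mono_neutral_right[OF finite_gens])
    show "?emb ` Pow ?T \<subseteq> gens w' (Suc m)" using gQ by auto
    show "\<forall>g\<in>gens w' (Suc m) - ?emb ` Pow ?T. ?\<theta> g * dcoef w' (Suc m) g g' = 0"
      unfolding theta_def by (auto split: if_splits)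
  qed
  also have "\<dots> = (\<Sum>Q\<in>Pow ?T. ?\<theta> (vo w, Q) * dcoef w' (Suc m) (vo w, Q) g')"
    by (rule sum.reindex_cong[where l = ?emb]) (auto intro: inj_onI)
  also have "\<dots> = (\<Sum>Q\<in>Pow ?T. \<sigma> * ?S * ((-1)^card Q * ?ec Q))"
    using gQ dc by (intro sum.cong) (auto simp: theta_def)
  finally show ?thesis by (simp add: sum_distrib_left)
qed

text \<open>At a positive crossing c the 1-resolution merges the strands bidx (w!c) and its successor,
  which carry x_| and x_- in theta. Since x_- is absorbing for the multiplication, the merge does not
  see the label of the x_| strand, and the two summands of x_| = x_- - x_+ cancel.\<close>

lemma alternating_sum_positive_crossing:
  assumes cL: "c < L" and bp: "bpos (w!c)"
  shows "(\<Sum>Q\<in>Pow (theta_circles w m b). (-1::int)^card Q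
     * edge_coef_on (circles w' (Suc m) (vo w)) (circles w' (Suc m) (insert c (vo w))) Q Q') = 0"
proof -
  let ?i = "bidx (w!c)"
  let ?T = "theta_circles w m b"
  let ?B = "circles w' (Suc m) (insert c (vo w))"
  have ii: "1 \<le> ?i" "Suc ?i \<le> m" using braid_word_bidx[OF bw cL] by auto
  have B: "?B = lift0 w m ` circles w m (insert c (vo w))"
    using circles_stab_word[OF bw m1, of "insert c (vo w)"] cL new_crossing_notin_vo by simp
  define jX where "jX = (if even ?i = b then ?i else Suc ?i)"
  define jY where "jY = (if even ?i = b then Suc ?i else ?i)"
  have jXY: "jX \<in> {?i, Suc ?i}" "jY \<in> {?i, Suc ?i}" "1 \<le> jX" "jX \<le> m" "1 \<le> jY" "jY \<le> m"
    "even jX = b" "even jY \<noteq> b" unfolding jX_def jY_def using ii by auto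
  have notB: "lift0 w m (strand_circle w j) \<notin> ?B" if j: "j \<in> {?i, Suc ?i}" "1 \<le> j" "j \<le> m" for j
  proof
    assume "lift0 w m (strand_circle w j) \<in> ?B"
    then obtain C where C: "C \<in> circles w m (insert c (vo w))" "lift0 w m (strand_circle w j) = lift0 w m C"
      unfolding B by auto
    have "strand_circle w j = C"
      using lift0_inj[OF strand_circle_subset_pts[OF j(2,3)] circle_subset_pts[OF C(1)] C(2)] .
    thus False using strand_circle_notin_circles[OF cL bp j(1)] C(1) by simp
  qed
  have XT: "lift0 w m (strand_circle w jX) \<in> ?T"
    unfolding theta_circles_def bar_circ_def using jXY by auto
  have YA: "lift0 w m (strand_circle w jY) \<in> circles w' (Suc m) (vo w)"
    unfolding circles_stab_vo using strand_circle_in_circles_vo jXY by auto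
  have YT: "lift0 w m (strand_circle w jY) \<notin> ?T"
    unfolding theta_circles_def
    using inj_on_image_mem_iff[OF inj_on_lift0_circles strand_circle_in_circles_vo[OF jXY(5,6)]
        bar_circ_subset_circles_vo] strand_circle_in_bar_circ_iff[OF jXY(5,6)] jXY(8) by blast
  show ?thesis
    using alternating_sum_edge_coef_on[OF finite_theta_circles XT notB[OF jXY(1,3,4)] _ YT]
      YA notB[OF jXY(2,5,6)] by simp
qed

lemma khdiff_theta_resolved0:
  assumes g': "g' \<in> gens w' (Suc m)" "L \<notin> fst g'"
  shows "khdiff w' (Suc m) (theta w m b \<sigma>) g' = 0"
proof (cases "\<exists>c \<in> {..<Suc L} - vo w. fst g' = insert c (vo w)")
  case True
  then obtain c where c: "c \<in> {..<Suc L} - vo w" "fst g' = insert c (vo w)" by blast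
  have cL: "c < L" using c g'(2) by (auto simp: less_Suc_eq)
  have "bpos (w!c)" using c cL unfolding vo_def by auto
  thus ?thesis using khdiff_theta_factor[OF g'(1)] alternating_sum_positive_crossing[OF cL] c(2)
    by simp
next
  case False
  thus ?thesis using khdiff_theta_factor[OF g'(1)] by (simp add: sum.neutral)
qed

lemma theta_E_supported: "E_supported (theta w m b \<sigma>)"
  unfolding E_supported_def theta_def using new_crossing_notin_vo by auto

lemma theta_Egen: assumes "(v,P) \<in> gens w m"
  shows "theta w m b \<sigma> (Egen w m (v,P)) = \<sigma> * psi w m b (v,P)"
proof (cases "v = vo w")
  case True
  have P: "P \<subseteq> circles w m (vo w)" using assms True unfolding gens_def by auto
  have i: "lift0 w m ` P \<subseteq> theta_circles w m b \<longleftrightarrow> P \<subseteq> bar_circ w m b"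
    unfolding theta_circles_def
      using inj_on_image_subset_iff[OF inj_on_lift0_circles[of "vo w"] P bar_circ_subset_circles_vo] .
  have c: "card (lift0 w m ` P) = card P" using card_image inj_on_subset[OF inj_on_lift0_circles P]
    by blast
  show ?thesis unfolding theta_def psi_def Egen_def using Egen_gens[OF assms] True i c
    by (simp add: Egen_def)
next
  case False thus ?thesis unfolding theta_def psi_def Egen_def by simp
qed

lemma Dgen_inj:
  assumes "(v,P) \<in> gens w m" "(v1,P1) \<in> gens w m" "Dgen w m (v,P) = Dgen w m (v1,P1)"
  shows "(v,P) = (v1,P1)"
proof -
  have "insert L v = insert L v1" using assms(3) unfolding Dgen_def by simp
  hence v: "v = v1" using assms gens_vertex by (metis insert_ident)
  have P: "P \<subseteq> circles w m v" "P1 \<subseteq> circles w m v" using assms v unfolding gens_def by auto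
  have "insert (U0 w m) (lift w ` P) = insert (U0 w m) (lift w ` P1)"
    using assms(3) unfolding Dgen_def by simp
  hence "lift w ` P = lift w ` P1" using U0_notin_lift_image[OF P(1)] U0_notin_lift_image[OF P(2)]
    by (metis insert_ident)
  thus ?thesis using inj_on_image_eq_iff[OF inj_on_lift_circles P] v by simp
qed

lemma stab_f_Dgen: assumes "k \<in> gens w m" shows "stab_f w m z (Dgen w m k) = z k"
proof -
  have "stab_f w m z (Dgen w m k) = (\<Sum>k'\<in>gens w m. if k' = k then z k' else 0)"
    unfolding stab_f_def
  proof (rule sum.cong)
    fix k' assume k': "k' \<in> gens w m"
    have "Dgen w m k = Dgen w m k' \<longleftrightarrow> k' = k"
      using Dgen_inj[of "fst k" "snd k" "fst k'" "snd k'"] assms k' by auto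
    thus "z k' * (if Dgen w m k = Dgen w m k' then 1 else 0) = (if k' = k then z k' else 0)" by simp
  qed simp
  also have "\<dots> = z k" using assms finite_gens by (simp add: sum.delta')
  finally show ?thesis .
qed

lemma stab_f_not_Dgen: assumes "\<forall>k\<in>gens w m. g \<noteq> Dgen w m k" shows "stab_f w m z g = 0"
  unfolding stab_f_def using assms by (intro sum.neutral) auto

lemma psi_stab_resolved0: "L \<notin> fst g \<Longrightarrow> psi w' (Suc m) b g = 0"
  unfolding psi_def vo_stab_word by auto

text \<open>The sign of theta_stab compensates the cube sign (-1)^card v of the edges from E to F and D.\<close>

abbreviation "theta_stab b \<equiv> theta w m b (- stab_sign m b * (-1)^card (vo w))"

lemma stab_f_psi_Fgen:
  assumes "(v,P) \<in> gens w m"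
  shows "stab_f w m (psi w m b) (Fgen w m (v,P))
    = stab_sign m b * psi w' (Suc m) b (Fgen w m (v,P)) + khdiff w' (Suc m) (theta_stab b) (Fgen w m (v,P))"
proof -
  have "stab_f w m (psi w m b) (Fgen w m (v,P)) = 0"
    using U0_notin_Fgen[OF assms] by (intro stab_f_not_Dgen) (auto simp: Dgen_def)
  moreover have "khdiff w' (Suc m) (theta_stab b) (Fgen w m (v,P))
      = - stab_sign m b * ((-1)^card (vo w) * ((-1)^card v * psi w m b (v,P)))"
    using khdiff_E_supported_Fgen[OF theta_E_supported assms] theta_Egen[OF assms] by simp
  ultimately show ?thesis
    unfolding psi_vertex_sign psi_stab_Fgen[OF assms] by simp
qed

lemma stab_f_psi_Dgen:
  assumes "(v,P) \<in> gens w m"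
  shows "stab_f w m (psi w m b) (Dgen w m (v,P))
    = stab_sign m b * psi w' (Suc m) b (Dgen w m (v,P)) + khdiff w' (Suc m) (theta_stab b) (Dgen w m (v,P))"
proof -
  let ?C = "stab_circle w m v"
  have "khdiff w' (Suc m) (theta_stab b) (Dgen w m (v,P))
      = - stab_sign m b * (-1)^card (vo w) * ((-1)^card v
          * ((if ?C \<in> P then -1 else 1) * psi w m b (v, insert ?C P)))"
    using khdiff_E_supported_Dgen[OF theta_E_supported assms]
      theta_Egen[OF gens_insert_stab_circle[OF assms]] by (simp add: algebra_simps)
  also have "\<dots> = - stab_sign m b * ((-1)^card (vo w)
      * (if even m = b then - ((-1)^card v * psi w m b (v,P)) else 0))"
    unfolding psi_insert_stab_circle[OF assms] by simp
  also have "\<dots> = - stab_sign m b * (if even m = b then - psi w m b (v,P) else 0)"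
    unfolding psi_vertex_sign by simp
  finally show ?thesis
    using stab_f_Dgen[OF assms] psi_stab_Dgen[OF assms] by (simp add: stab_sign_def)
qed

lemma stab_f_psi:
  "stab_f w m (psi w m b)
    = (\<lambda>g. stab_sign m b * psi w' (Suc m) b g + khdiff w' (Suc m) (theta_stab b) g)"
proof
  fix g
  show "stab_f w m (psi w m b) g = stab_sign m b * psi w' (Suc m) b g + khdiff w' (Suc m) (theta_stab b) g"
  proof (cases "g \<in> gens w' (Suc m) \<and> L \<in> fst g")
    case True
    then obtain v P where "(v,P) \<in> gens w m" "g = Dgen w m (v,P) \<or> g = Fgen w m (v,P)"
      using gens_resolved1_cases by (metis prod.exhaust)
    thus ?thesis using stab_f_psi_Dgen stab_f_psi_Fgen by blast
  next
    case False
    hence "stab_f w m (psi w m b) g = 0"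
      using Dgen_gens by (intro stab_f_not_Dgen) (auto simp: Dgen_def)
    moreover have "psi w' (Suc m) b g = 0"
      using False psi_stab_resolved0[of g b] psi_in_gens[of w' "Suc m" b g] by blast
    moreover have "khdiff w' (Suc m) (theta_stab b) g = 0"
      using False khdiff_not_gens khdiff_theta_resolved0 by blast
    ultimately show ?thesis by simp
  qed
qed

lemma card_circles_stab_vo: "card (circles w' (Suc m) (vo w)) \<le> m"
proof -
  have "card (circles w' (Suc m) (vo w)) \<le> card (circles w m (vo w))" unfolding circles_stab_vo
    by (rule card_image_le[OF finite_circles])
  also have "\<dots> \<le> card {1..m}" unfolding circles_vo by (rule card_image_le) simp
  finally show ?thesis by simp
qed

lemma theta_in_F: "in_F w' (Suc m) (sl w' (Suc m)) (-1) (theta w m b \<sigma>)"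
  unfolding in_F_def
proof (intro allI impI)
  fix g assume h: "theta w m b \<sigma> g \<noteq> 0"
  hence g: "g \<in> gens w' (Suc m)" "fst g = vo w" "snd g \<subseteq> theta_circles w m b" unfolding theta_def
    by (auto split: if_splits)
  have "card (circles w' (Suc m) (fst g) - snd g) \<le> card (circles w' (Suc m) (fst g))"
    by (rule card_mono[OF finite_circles Diff_subset])
  hence "card (circles w' (Suc m) (fst g) - snd g) \<le> m" using g(2) card_circles_stab_vo by simp
  thus "g \<in> gens w' (Suc m) \<and> grh w' g = -1 \<and> sl w' (Suc m) \<le> grq w' (Suc m) g"
    using g unfolding grh_def grq_def sl_def nneg_stab_word npos_stab_word by (auto simp: card_vo)
qed

abbreviation "stab_region \<equiv> {(L, m), (L, Suc m), (Suc L, m), (Suc L, Suc m)}"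

lemma circle_away_from_stab_region:
  assumes C: "C \<in> circles w' (Suc m) (vo w)" "C \<inter> stab_region = {}"
  shows "\<exists>j. 1 \<le> j \<and> j < m \<and> C = strand_circle w' j \<and> (C \<in> theta_circles w m b \<longleftrightarrow> even j = b)"
proof -
  have "C \<in> lift0 w m ` (strand_circle w ` {1..m})" using C(1)
    unfolding circles_stab_vo circles_vo .
  then obtain D where D: "D \<in> strand_circle w ` {1..m}" "C = lift0 w m D" by (rule imageE)
  from D(1) obtain j where jj: "j \<in> {1..m}" "D = strand_circle w j" by (rule imageE)
  have j: "1 \<le> j" "j \<le> m" "C = lift0 w m (strand_circle w j)" using jj D by auto
  have jm: "j \<noteq> m"
  proof
    assume jm: "j = m"
    have "(L,m) \<in> strand_circle w m" unfolding strand_circle_def by simp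
    hence "(L,m) \<in> lift0 w m (strand_circle w m)" unfolding lift0_def lift_def by simp
    hence "(L,m) \<in> C" using j jm by simp
    moreover have "(L,m) \<in> stab_region" by simp
    ultimately show False using C(2) by blast
  qed
  have nl: "(L,m) \<notin> strand_circle w j" using jm unfolding strand_circle_def by simp
  have Cs: "C = strand_circle w' j"
    using j(3) lift0_eq_lift[OF nl] strand_circle_stab_word[of w m j] by simp
  have "C \<in> theta_circles w m b \<longleftrightarrow> strand_circle w j \<in> bar_circ w m b"
    unfolding theta_circles_def j(3)
      using inj_on_image_mem_iff[OF inj_on_lift0_circles strand_circle_in_circles_vo[OF j(1,2)] bar_circ_subset_circles_vo] .
  also have "\<dots> \<longleftrightarrow> even j = b" using strand_circle_in_bar_circ_iff[OF j(1,2)] .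
  finally have "C \<in> theta_circles w m b \<longleftrightarrow> even j = b" .
  moreover have "j < m" using j(2) jm by simp
  ultimately show ?thesis using Cs j(1) by blast
qed

lemma canon_coef_away_from_stab_region:
  assumes "C \<in> circles w' (Suc m) (vo w)" "C \<inter> stab_region = {}"
  shows "canon_coef w' (Suc m) b C x
    = (if C \<in> theta_circles w m b then (if x then -1 else 1) else if x then 0 else 1)"
proof -
  obtain j where j: "1 \<le> j" "j < m" "C = strand_circle w' j" "C \<in> theta_circles w m b \<longleftrightarrow> even j = b"
    using circle_away_from_stab_region[OF assms] by blast
  have "C \<in> bar_circ w' (Suc m) b \<longleftrightarrow> even j = b"
    using strand_circle_in_bar_circ_iff[of j "Suc m" w' b] j by simp
  moreover have "\<exists>j. 1 \<le> j \<and> j \<le> Suc m \<and> C = strand_circle w' j" using j by auto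
  ultimately show ?thesis unfolding canon_coef_def using j(4) by auto
qed

lemma theta_local: "is_local w' (Suc m) b {L} stab_region (theta w m b \<sigma>)"
proof -
  let ?A = "circles w' (Suc m) (vo w)"
  let ?near = "{C. C \<inter> stab_region \<noteq> {}}"
  let ?label = "\<lambda>C x. if C \<in> theta_circles w m b then (if x then -1 else 1) else if x then 0 else (1::int)"
  define u where "u = (\<lambda>v R. if v = vo w then \<sigma> * (\<Prod>C\<in>?A \<inter> ?near. ?label C (C \<in> R)) else 0)"
  have support: "\<forall>g. theta w m b \<sigma> g \<noteq> 0 \<longrightarrow> g \<in> gens w' (Suc m) \<and>
      (\<forall>k<length w'. k \<notin> {L} \<longrightarrow> (k \<in> fst g \<longleftrightarrow> k \<in> vo w'))"
    unfolding theta_def vo_stab_word by auto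
  have factorization: "theta w m b \<sigma> (v, P)
      = u v (P \<inter> {C \<in> circles w' (Suc m) v. C \<inter> stab_region \<noteq> {}})
        * (\<Prod>C \<in> {C \<in> circles w' (Suc m) v. C \<inter> stab_region = {}}. canon_coef w' (Suc m) b C (C \<in> P))"
    if vP: "(v, P) \<in> gens w' (Suc m)" for v P
  proof (cases "v = vo w")
    case True
    have P: "P \<subseteq> ?A" using vP True unfolding gens_def by auto
    have "theta w m b \<sigma> (v,P) = \<sigma> * (\<Prod>C\<in>?A. ?label C (C \<in> P))"
      unfolding theta_def using vP True prod_sign_labels[OF finite_circles P] by simp
    also have "\<dots> = \<sigma> * ((\<Prod>C\<in>?A \<inter> ?near. ?label C (C \<in> P)) * (\<Prod>C\<in>?A - ?near. ?label C (C \<in> P)))"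
      by (simp add: prod.Int_Diff[OF finite_circles])
    also have "(\<Prod>C\<in>?A \<inter> ?near. ?label C (C \<in> P))
        = (\<Prod>C\<in>?A \<inter> ?near. ?label C (C \<in> P \<inter> {C \<in> circles w' (Suc m) v. C \<inter> stab_region \<noteq> {}}))"
      using True by (intro prod.cong) auto
    also have "(\<Prod>C\<in>?A - ?near. ?label C (C \<in> P))
        = (\<Prod>C \<in> {C \<in> circles w' (Suc m) v. C \<inter> stab_region = {}}. canon_coef w' (Suc m) b C (C \<in> P))"
      using True canon_coef_away_from_stab_region by (intro prod.cong) auto
    finally show ?thesis unfolding u_def using True by (simp add: mult.assoc)
  qed (simp add: theta_def u_def)
  show ?thesis unfolding is_local_def using support factorization by blast
qed

end

theorem proposition4p7:
  fixes w :: "bgen list" and m :: nat and b :: bool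
  assumes "1 \<le> m" and "braid_word m w"
  shows "(\<exists>\<theta>. in_F w m (sl (w @ [SigInv m]) (Suc m)) (-1) \<theta>
             \<and> is_local w m b {} {(length w, m)} \<theta>
             \<and> (\<exists>\<epsilon> \<in> {1, -1::int}.
                  stab_g w m (psi (w @ [SigInv m]) (Suc m) b)
                    = (\<lambda>g. \<epsilon> * psi w m b g + khdiff w m \<theta> g)))
       \<and> (\<exists>\<theta>'. in_F (w @ [SigInv m]) (Suc m) (sl (w @ [SigInv m]) (Suc m)) (-1) \<theta>'
             \<and> is_local (w @ [SigInv m]) (Suc m) b {length w}
                 {(length w, m), (length w, Suc m), (Suc (length w), m), (Suc (length w), Suc m)} \<theta>'
             \<and> (\<exists>\<epsilon> \<in> {1, -1::int}.
                  stab_f w m (psi w m b)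
                    = (\<lambda>g. \<epsilon> * psi (w @ [SigInv m]) (Suc m) b g
                           + khdiff (w @ [SigInv m]) (Suc m) \<theta>' g)))"
proof -
  interpret neg_stab w m using assms by unfold_locales auto
  have "stab_sign m b \<in> {1, -1}" by (simp add: stab_sign_def)
  moreover have "stab_g w m (psi (w @ [SigInv m]) (Suc m) b)
      = (\<lambda>g. stab_sign m b * psi w m b g + khdiff w m (\<lambda>_. 0) g)"
    by (simp add: stab_g_psi khdiff_zero)
  ultimately show ?thesis
    using in_F_zero is_local_zero theta_in_F theta_local stab_f_psi by blast
qed

end
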